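(* Let $k,l,m$ be positive integers, $n=(l+1)k$, and let $A\in\mathbb{R}^{m\times n}$ have $2k$-restricted isometry constant $\delta_{2k}\in[\frac{\sqrt2}{2},1)$. Let $x\in\mathbb{R}^n$, $\epsilon\ge0$, $e\in\mathbb{R}^m$ with $\|e\|_2\le\epsilon$, $y=Ax+e$, let $p\in(0,1)$, let $x^{\star}$ be a solution of $\min_{\gamma}\|\gamma\|_p$ subject to $\|y-A\gamma\|_2\le\epsilon$, and let $h=x-x^{\star}$, $T_0=\{1,\dots,k\}$, $T_0^c=\{k+1,\dots,n\}$. Then $$\|h_{T_0}\|_p^p\le\frac{2^{\frac{3p}{2}}}{(1-\delta_{2k})^{\frac p2}}k^{1-\frac p2}\epsilon^p+C(p)\|h_{T_0^c}\|_p^p,$$ where $$C(p)=\begin{cases}\left(\dfrac{\big((2-\delta_{2k})^{1-\frac{2}{p}}+2\delta_{2k}\big)g(p)}{1-\delta_{2k}}\right)^{p/2}, & p\in(0,p^{\star}],\\[2ex] \left(\dfrac{(2-\delta_{2k})^{1-\frac{2}{p}}g(p)+2^{2-\frac{2}{p}}\delta_{2k}}{1-\delta_{2k}}\right)^{p/2}, & p\in(p^{\star},1).\end{cases}$$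
   Context: For $1\le s\le n$, the $s$-restricted isometry constant $\delta_s$ of $A$ is the smallest constant such that $(1-\delta_s)\|z\|_2^2\le\|Az\|_2^2\le(1+\delta_s)\|z\|_2^2$ for all $s$-sparse $z\in\mathbb{R}^n$. For $p\in(0,1)$, $\|\gamma\|_p=(\sum_i|\gamma_i|^p)^{1/p}$. For a vector $v$ and index set $T$, $v_T$ is the vector equal to $v$ on $T$ and zero elsewhere. $g(p)=\frac{p}{2}(1-\frac{p}{2})^{\frac{2}{p}-1}$. $p^{\star}\approx0.45418$ is the unique solution in $(0,1]$ of $(\frac{p}{2})^{1/2}(2-p)^{\frac1p-\frac12}=1$. *)

theory Defs
  imports Complex_Main
begin

text \<open>Vectors in R^n are functions nat => real, only entries 0..n-1 matter.
  Matrices in R^(m x n) are functions nat => nat => real, entries A i j with i<m, j<n.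
  Index i (0-based) corresponds to index i+1 of the paper.\<close>

definition mat_vec :: "nat \<Rightarrow> nat \<Rightarrow> (nat \<Rightarrow> nat \<Rightarrow> real) \<Rightarrow> (nat \<Rightarrow> real) \<Rightarrow> (nat \<Rightarrow> real)" where
  "mat_vec m n A z = (\<lambda>i. if i < m then (\<Sum>j<n. A i j * z j) else 0)"

definition norm2 :: "nat \<Rightarrow> (nat \<Rightarrow> real) \<Rightarrow> real" where
  "norm2 n v = sqrt (\<Sum>i<n. (v i)\<^sup>2)"

definition lpnorm :: "nat \<Rightarrow> real \<Rightarrow> (nat \<Rightarrow> real) \<Rightarrow> real" where
  "lpnorm n p v = (\<Sum>i<n. \<bar>v i\<bar> powr p) powr (1 / p)"

definition restrict_vec :: "(nat \<Rightarrow> real) \<Rightarrow> nat set \<Rightarrow> (nat \<Rightarrow> real)" where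
  "restrict_vec v T = (\<lambda>i. if i \<in> T then v i else 0)"

definition sparse :: "nat \<Rightarrow> nat \<Rightarrow> (nat \<Rightarrow> real) \<Rightarrow> bool" where
  "sparse n s z \<longleftrightarrow> card {i. i < n \<and> z i \<noteq> 0} \<le> s"

definition ric :: "nat \<Rightarrow> nat \<Rightarrow> (nat \<Rightarrow> nat \<Rightarrow> real) \<Rightarrow> nat \<Rightarrow> real" where
  "ric m n A s = Inf {\<delta>. \<forall>z. sparse n s z \<longrightarrow>
      (1 - \<delta>) * (norm2 n z)\<^sup>2 \<le> (norm2 m (mat_vec m n A z))\<^sup>2 \<and>
      (norm2 m (mat_vec m n A z))\<^sup>2 \<le> (1 + \<delta>) * (norm2 n z)\<^sup>2}"

definition g_fun :: "real \<Rightarrow> real" where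
  "g_fun p = p / 2 * (1 - p / 2) powr (2 / p - 1)"

definition p_star :: real where
  "p_star = (THE p. 0 < p \<and> p \<le> 1 \<and> (p / 2) powr (1/2) * (2 - p) powr (1 / p - 1/2) = 1)"

definition C_const :: "real \<Rightarrow> real \<Rightarrow> real" where
  "C_const \<delta> p = (if p \<le> p_star
     then (((2 - \<delta>) powr (1 - 2 / p) + 2 * \<delta>) * g_fun p / (1 - \<delta>)) powr (p / 2)
     else (((2 - \<delta>) powr (1 - 2 / p) * g_fun p + 2 powr (2 - 2 / p) * \<delta>) / (1 - \<delta>)) powr (p / 2))"

end

theory Submission
  imports Defs "HOL-Analysis.Convex"
begin

(*
  Feasibility of x and x* gives ||A h||_2 <= 2 eps; nothing else about x*
  (in particular not its minimality) is needed. Sort the entries of h off T0 by decreasing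
  modulus and cut them into blocks T1, ..., Tl of size k. The RIP on T0 u T1 and the
  near-orthogonality |<A u, A v>| <= delta ||u|| ||v|| of disjointly supported k-sparse
  vectors give, with T = ||A h'|| for h' the restriction of h to T2 u ... u Tl,
    (1 - delta) (||h_T0||^2 + ||h_T1||^2) <= (2 eps + T)^2,
    T^2 <= sum_{j>=2} ||h_Tj||^2 + delta (sum_{j>=2} ||h_Tj||)^2.
  By sortedness the l2-energy of a block is controlled by the lp-mass of the previous one,
  and the weighted AM-GM inequality X^(2/p-1) (Q - X) <= g(p) Q^(2/p) turns all these
  energies into multiples of k^(1-2/p) ||h_T0c||_p^2. The two regimes of C(p) come from two
  bounds on sum_j (x_{j-1}^(2/p-1) x_j)^(1/2) for a decreasing sequence x of sum Q, namely
  (5/4) g(p)^(1/2) Q^(1/p) and 2^(1-1/p) Q^(1/p); p* is where g(p) = 2^(1-2/p).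
  Finally ||h_T0||_p^p <= k^(1-p/2) ||h_T0||_2^p.
*)

section \<open>Elementary inequalities\<close>

lemma powr_mult_diff_le:
  fixes q Y Q :: real
  assumes q: "q > 0" and Y: "0 \<le> Y" "Y \<le> Q"
  shows "Y powr q * (Q - Y) \<le> q powr q / (q+1) powr (q+1) * Q powr (q+1)"
proof (cases "Y = 0 \<or> Y = Q")
  case True
  then show ?thesis using q Y by (auto intro!: mult_nonneg_nonneg divide_nonneg_nonneg)
next
  case False
  hence Yp: "Y > 0" and YQ: "Y < Q" using Y by auto
  define a where "a = q/(q+1)"
  define b where "b = 1/(q+1)"
  have ab: "0 \<le> a" "0 \<le> b" "a + b = 1" using q by (auto simp: a_def b_def field_simps)
  have "(Y/q) powr a * (Q - Y) powr b \<le> a * (Y/q) + b * (Q - Y)"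
    by (rule Youngs_inequality_0) (use ab q Yp YQ in auto)
  also have "\<dots> = Q/(q+1)"
    using q by (simp add: a_def b_def add_divide_distrib[symmetric])
  finally have young: "(Y/q) powr a * (Q - Y) powr b \<le> Q/(q+1)" .
  have "((Y/q) powr a * (Q - Y) powr b) powr (q+1) \<le> (Q/(q+1)) powr (q+1)"
    by (rule powr_mono2) (use young q in auto)
  moreover have "((Y/q) powr a * (Q - Y) powr b) powr (q+1) = (Y/q) powr q * (Q - Y)"
    using q Yp YQ by (simp add: powr_mult powr_powr a_def b_def)
  ultimately have "Y powr q / q powr q * (Q - Y) \<le> Q powr (q+1) / (q+1) powr (q+1)"
    using q Yp YQ by (simp add: powr_divide)
  then show ?thesis using q by (simp add: field_simps)
qed

lemma g_fun_eq:
  assumes p: "0 < p" "p < 1"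
  shows "g_fun p = (2/p-1) powr (2/p-1) / (2/p) powr (2/p)"
proof -
  define q where "q = 2/p - 1"
  have q: "q > 0" using p by (simp add: q_def field_simps)
  have q1: "q + 1 = 2/p" by (simp add: q_def)
  have "(q+1) powr (q+1) = (q+1) * (q+1) powr q"
    using q by (simp add: powr_add)
  hence "q powr q / (q+1) powr (q+1) = (1/(q+1)) * (q/(q+1)) powr q"
    using q by (simp add: powr_divide)
  also have "1/(q+1) = p/2" using q1 by simp
  also have "q/(q+1) = 1 - p/2" using q1 p by (simp add: q_def field_simps)
  finally have "q powr q / (q+1) powr (q+1) = g_fun p"
    by (simp add: g_fun_def q_def)
  thus ?thesis using q1 by (simp add: q_def)
qed

lemma g_fun_nonneg: "0 < p \<Longrightarrow> 0 \<le> g_fun p"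
  by (simp add: g_fun_def)

text \<open>The constant \<open>g(p)\<close> is the sharp constant of this inequality.\<close>

lemma powr_mult_diff_le_g_fun:
  fixes X Q c p :: real
  assumes p: "0 < p" "p < 1" and X: "0 \<le> X" and c: "c > 0" and Q: "0 \<le> Q"
  shows "X powr (2/p-1) * (Q - c*X) \<le> c powr (1 - 2/p) * g_fun p * Q powr (2/p)"
proof (cases "Q - c*X \<le> 0")
  case True
  have "X powr (2/p-1) * (Q - c*X) \<le> 0" using True by (simp add: mult_nonneg_nonpos)
  also have "0 \<le> c powr (1 - 2/p) * g_fun p * Q powr (2/p)" using g_fun_nonneg[OF p(1)] by simp
  finally show ?thesis .
next
  case False
  define q where "q = 2/p - 1"
  have q: "q > 0" using p by (simp add: q_def field_simps)
  have "(c*X) powr q * (Q - c*X) \<le> q powr q / (q+1) powr (q+1) * Q powr (q+1)"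
    by (rule powr_mult_diff_le) (use q X c False in auto)
  hence "c powr q * (X powr q * (Q - c*X)) \<le> g_fun p * Q powr (2/p)"
    using g_fun_eq[OF p] c X by (simp add: q_def powr_mult mult.assoc)
  hence "X powr q * (Q - c*X) \<le> g_fun p * Q powr (2/p) / c powr q"
    using c by (simp add: field_simps)
  also have "\<dots> = c powr (1 - 2/p) * g_fun p * Q powr (2/p)"
  proof -
    have "c powr (1 - 2/p) = inverse (c powr q)" by (simp add: q_def flip: powr_minus)
    thus ?thesis by (simp add: divide_inverse)
  qed
  finally show ?thesis by (simp add: q_def)
qed

lemma powr_mult_diff_half_le:
  fixes x0 Q b :: real
  assumes "0 \<le> x0" "x0 \<le> Q" "0 \<le> b" "b \<le> 1"
  shows "x0 powr b * (Q - x0/2) \<le> 2 powr (-b) * Q powr (b+1)"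
proof (cases "x0 = 0")
  case True thus ?thesis using assms by simp
next
  case False
  hence x0: "x0 > 0" using assms by simp
  hence Q: "Q > 0" using assms by simp
  have key: "(2*x0) powr b * (Q - x0/2) \<le> Q powr (b+1)"
  proof (cases "2*x0 \<le> Q")
    case True
    have "(2*x0) powr b \<le> Q powr b" by (rule powr_mono2) (use assms True in auto)
    moreover have "Q - x0/2 \<le> Q" using x0 by simp
    ultimately have "(2*x0) powr b * (Q - x0/2) \<le> Q powr b * Q"
      by (rule mult_mono) (use assms in auto)
    thus ?thesis using Q by (simp add: powr_add)
  next
    case False
    have r: "2*x0/Q \<ge> 1" using False Q by simp
    have "(2*x0/Q) powr b \<le> (2*x0/Q) powr 1" by (rule powr_mono) (use r assms in auto)
    hence "(2*x0) powr b \<le> Q powr b * (2*x0/Q)" using r Q x0 by (simp add: powr_divide field_simps)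
    hence "(2*x0) powr b * (Q - x0/2) \<le> Q powr b * (2*x0/Q) * (Q - x0/2)"
      by (rule mult_right_mono) (use assms in auto)
    also have "\<dots> = Q powr b * ((2*x0*Q - x0*x0) / Q)" using Q by (simp add: field_simps)
    also have "\<dots> \<le> Q powr b * (Q*Q/Q)"
    proof -
      have "2*x0*Q - x0*x0 \<le> Q*Q" using zero_le_power2[of "Q - x0"] by (simp add: power2_eq_square algebra_simps)
      thus ?thesis using Q by (intro mult_left_mono divide_right_mono) auto
    qed
    also have "\<dots> = Q powr (b+1)" using Q by (simp add: powr_add)
    finally show ?thesis .
  qed
  have "x0 powr b * (Q - x0/2) = 2 powr (-b) * ((2*x0) powr b * (Q - x0/2))"
    using x0 by (simp add: powr_mult powr_minus field_simps)
  also have "\<dots> \<le> 2 powr (-b) * Q powr (b+1)" using key by simp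
  finally show ?thesis .
qed

lemma two_block_quadratic_le:
  fixes x0 x1 W Q :: real
  assumes "0 \<le> x1" "x1 \<le> x0" "x0 + x1 \<le> Q" "0 \<le> W" "W \<le> 2*x1" "W \<le> Q - x0"
  shows "(x0+x1)^2 + W*(2*Q - 2*x0 - x1) \<le> 5/4 * Q^2"
proof -
  have nn: "0 \<le> 2*Q - 2*x0 - x1" using assms by linarith
  show ?thesis
  proof (cases "2*x1 \<le> Q - x0")
    case True
    have "W*(2*Q - 2*x0 - x1) \<le> 2*x1*(2*Q - 2*x0 - x1)" using assms nn by (intro mult_right_mono) auto
    moreover have "(x0+x1)^2 + 2*x1*(2*Q - 2*x0 - x1) \<le> 5/4 * Q^2"
    proof -
      define Q0 where "Q0 = x0 + 2*x1"
      have f1: "0 \<le> (Q-Q0)*(5/4*(Q+Q0)-4*x1)" using assms True by (intro mult_nonneg_nonneg) (auto simp: Q0_def)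
      have f2: "0 \<le> x1*(x0-x1)" using assms by simp
      have "5/4 * Q^2 - ((x0+x1)^2 + 2*x1*(2*Q - 2*x0 - x1))
          = (Q-Q0)*(5/4*(Q+Q0)-4*x1) + x0^2/4 + 3*(x1*(x0-x1)) + x1^2"
        by (simp add: Q0_def power2_eq_square field_simps)
      moreover have "0 \<le> x0^2" "0 \<le> x1^2" by simp_all
      ultimately show ?thesis using f1 f2 by linarith
    qed
    ultimately show ?thesis by linarith
  next
    case False
    have "W*(2*Q - 2*x0 - x1) \<le> (Q-x0)*(2*Q - 2*x0 - x1)" using assms nn by (intro mult_right_mono) auto
    moreover have "(x0+x1)^2 + (Q-x0)*(2*Q - 2*x0 - x1) \<le> 5/4 * Q^2"
    proof -
      define e where "e = Q - x0 - x1"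
      have e0: "0 \<le> e" "e \<le> x1" using assms False by (auto simp: e_def)
      have f1: "0 \<le> (x0-x1)*(x0+3*x1)" using assms by simp
      have f2: "0 \<le> e*(x0-x1)" using assms e0 by simp
      have f3: "0 \<le> e*(x1-e)" using e0 by simp
      have f4: "0 \<le> e*x1" using e0 assms by simp
      have "5/4 * Q^2 - ((x0+x1)^2 + (Q-x0)*(2*Q - 2*x0 - x1))
          = (x0-x1)*(x0+3*x1)/4 + 5/2*(e*(x0-x1)) + 3/4*(e*(x1-e)) + 5/4*(e*x1)"
        by (simp add: e_def power2_eq_square field_simps)
      thus ?thesis using f1 f2 f3 f4 by linarith
    qed
    ultimately show ?thesis by linarith
  qed
qed

lemma two_block_powr_le:
  fixes x0 x1 W Q r :: real
  assumes x: "0 \<le> x1" "x1 \<le> x0" "x0 + x1 \<le> Q" and W: "0 \<le> W" "W \<le> 2*x1" "W \<le> Q - x0"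
    and r: "2 \<le> r"
  shows "(x0+x1) powr r + W powr (r-1) * (2*Q - 2*x0 - x1) \<le> 5/4 * Q powr r"
proof -
  have s0: "0 \<le> x0 + x1" using x by linarith
  have nn: "0 \<le> 2*Q - 2*x0 - x1" using x W by linarith
  have "(x0 + x1) powr r = (x0 + x1) powr 2 * (x0 + x1) powr (r-2)"
    using powr_add[of "x0 + x1" 2 "r-2"] by simp
  also have "\<dots> \<le> (x0 + x1) powr 2 * Q powr (r-2)"
    by (intro mult_left_mono powr_mono2) (use x s0 r in auto)
  also have "(x0 + x1) powr 2 = (x0 + x1)^2" using s0 by (simp add: powr_realpow')
  finally have e1: "(x0 + x1) powr r \<le> (x0 + x1)^2 * Q powr (r-2)" .
  have "W powr (r-1) = W powr 1 * W powr (r-2)" using powr_add[of W 1 "r-2"] by simp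
  also have "\<dots> \<le> W powr 1 * Q powr (r-2)"
    by (intro mult_left_mono powr_mono2) (use W x r in auto)
  also have "W powr 1 = W" using W by simp
  finally have e2: "W powr (r-1) \<le> W * Q powr (r-2)" .
  have "(x0+x1) powr r + W powr (r-1) * (2*Q - 2*x0 - x1)
      \<le> Q powr (r-2) * ((x0+x1)^2 + W*(2*Q - 2*x0 - x1))"
    using e1 mult_right_mono[OF e2 nn] by (simp add: algebra_simps)
  also have "\<dots> \<le> Q powr (r-2) * (5/4 * Q^2)"
    using two_block_quadratic_le[OF x W] by (intro mult_left_mono) auto
  also have "\<dots> = 5/4 * Q powr r"
  proof (cases "Q = 0")
    case True thus ?thesis using r by simp
  next
    case False
    hence "Q > 0" using x by linarith
    hence "Q powr (r-2) * Q^2 = Q powr r" using powr_add[of Q "r-2" 2] by (simp add: powr_realpow)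
    thus ?thesis by simp
  qed
  finally show ?thesis .
qed

lemma power2_eq_powr_mult_powr:
  fixes x p :: real
  assumes "0 \<le> x"
  shows "x^2 = x powr (2-p) * x powr p"
proof (cases "x = 0")
  case False
  thus ?thesis using assms powr_add[of x "2-p" p] by (simp add: powr_realpow)
qed simp

lemma square_le_powr_mult_powr:
  fixes x \<mu> p :: real
  assumes "0 \<le> x" "x \<le> \<mu>" "0 < p" "p < 1"
  shows "x^2 \<le> \<mu> powr (2-p) * x powr p"
  unfolding power2_eq_powr_mult_powr[OF assms(1), of p]
  by (intro mult_right_mono powr_mono2) (use assms in auto)

lemma powr_two_minus_eq:
  fixes \<mu> k p :: real
  assumes "0 \<le> \<mu>" "0 < k" "0 < p"
  shows "\<mu> powr (2-p) = k powr (1 - 2/p) * (k * \<mu> powr p) powr (2/p - 1)"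
proof -
  have "(k * \<mu> powr p) powr (2/p - 1) = k powr (2/p - 1) * \<mu> powr (p * (2/p-1))"
    using assms by (simp add: powr_mult powr_powr)
  also have "p * (2/p - 1) = 2 - p" using assms by (simp add: field_simps)
  finally show ?thesis using assms by (simp flip: powr_add)
qed

lemma powr_add_le_add_powr:
  fixes x y p :: real
  assumes "0 \<le> x" "0 \<le> y" "0 < p" "p \<le> 1"
  shows "(x + y) powr p \<le> x powr p + y powr p"
proof (cases "x + y = 0")
  case True thus ?thesis using assms by simp
next
  case False
  hence s: "x + y > 0" using assms by simp
  have "x/(x+y) \<le> (x/(x+y)) powr p" "y/(x+y) \<le> (y/(x+y)) powr p"
    using powr_mono'[of p 1 "x/(x+y)"] powr_mono'[of p 1 "y/(x+y)"] assms s by simp_all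
  moreover have "x/(x+y) + y/(x+y) = 1" using s by (simp add: add_divide_distrib[symmetric])
  ultimately have "(x+y) powr p * 1 \<le> (x+y) powr p * ((x/(x+y)) powr p + (y/(x+y)) powr p)"
    by (intro mult_left_mono) auto
  also have "\<dots> = x powr p + y powr p"
    using s assms by (simp add: powr_divide distrib_left)
  finally show ?thesis by simp
qed

lemma sum_powr_le_card_powr_sum_squares:
  fixes z :: "nat \<Rightarrow> real" and k :: nat and p :: real
  assumes p: "0 < p" "p < 2" and k: "k > 0"
  shows "(\<Sum>i<k. \<bar>z i\<bar> powr p) \<le> real k powr (1 - p/2) * (\<Sum>i<k. (z i)^2) powr (p/2)"
proof (cases "(\<Sum>i<k. (z i)^2) = 0")
  case True
  hence "\<And>i. i < k \<Longrightarrow> z i = 0" by (subst (asm) sum_nonneg_eq_0_iff) auto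
  thus ?thesis using p by simp
next
  case False
  define S where "S = (\<Sum>i<k. (z i)^2)"
  have S: "S > 0" using False by (simp add: S_def sum_nonneg order_le_neq_trans)
  define M where "M = S / k"
  have M: "M > 0" using S k by (simp add: M_def)
  have each: "\<bar>z i\<bar> powr p \<le> M powr (p/2) * (p/2 * ((z i)^2 / M) + (1 - p/2))" for i
  proof (cases "z i = 0")
    case True thus ?thesis using p M by (simp add: mult_pos_pos)
  next
    case False
    have "((z i)^2 / M) powr (p/2) * 1 powr (1 - p/2) \<le> p/2 * ((z i)^2 / M) + (1 - p/2) * 1"
      by (rule Youngs_inequality_0) (use p M False in auto)
    hence y: "((z i)^2 / M) powr (p/2) \<le> p/2 * ((z i)^2 / M) + (1 - p/2)" by simp
    have sq: "(z i)^2 = \<bar>z i\<bar> powr 2" using powr_realpow[of "\<bar>z i\<bar>" 2] False by simp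
    have "\<bar>z i\<bar> powr p = ((z i)^2) powr (p/2)" unfolding sq powr_powr by simp
    also have "\<dots> = M powr (p/2) * ((z i)^2 / M) powr (p/2)"
      using M by (simp add: powr_divide)
    also have "\<dots> \<le> M powr (p/2) * (p/2 * ((z i)^2 / M) + (1 - p/2))"
      using y by (intro mult_left_mono) auto
    finally show ?thesis .
  qed
  have "(\<Sum>i<k. \<bar>z i\<bar> powr p) \<le> (\<Sum>i<k. M powr (p/2) * (p/2 * ((z i)^2 / M) + (1 - p/2)))"
    by (intro sum_mono each)
  also have "\<dots> = M powr (p/2) * (\<Sum>i<k. p/2 * ((z i)^2 / M) + (1 - p/2))"
    by (simp add: sum_distrib_left)
  also have "(\<Sum>i<k. p/2 * ((z i)^2 / M) + (1 - p/2)) = p/2 * (S / M) + k * (1 - p/2)"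
    by (simp add: sum.distrib S_def sum_divide_distrib sum_distrib_left)
  also have "S / M = k" using k S by (simp add: M_def)
  also have "M powr (p/2) * (p/2 * real k + k * (1 - p/2)) = real k powr (p/2 + (1 - p/2)) * M powr (p/2)"
    using k by (simp add: algebra_simps)
  also have "\<dots> = real k powr (1 - p/2) * (real k * M) powr (p/2)"
    using k M by (simp add: powr_mult flip: powr_add)
  also have "real k * M = S" using k by (simp add: M_def)
  finally show ?thesis by (simp add: S_def)
qed

section \<open>The threshold \<open>p\<^sup>\<star>\<close>\<close>

text \<open>Twice the logarithm of the function whose root in \<open>(0,1]\<close> defines \<open>p\<^sup>\<star>\<close>.\<close>

definition p_star_log :: "real \<Rightarrow> real" where
  "p_star_log p = ln (p/2) + (2/p - 1) * ln (2 - p)"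

lemma p_star_equation_iff:
  assumes "0 < p" "p < 2"
  shows "(p / 2) powr (1/2) * (2 - p) powr (1 / p - 1/2) = 1 \<longleftrightarrow> p_star_log p = 0"
proof -
  have "(p / 2) powr (1/2) * (2 - p) powr (1 / p - 1/2) = exp (1/2 * ln (p/2) + (1/p - 1/2) * ln (2-p))"
    using assms by (simp add: powr_def exp_add)
  also have "1/2 * ln (p/2) + (1/p - 1/2) * ln (2-p) = p_star_log p / 2"
    by (simp add: p_star_log_def field_simps)
  finally show ?thesis by simp
qed

lemma p_star_log_deriv:
  assumes "0 < x" "x < 2"
  shows "DERIV p_star_log x :> - 2 * ln (2 - x) / x^2"
proof -
  have "DERIV (\<lambda>p. ln (p/2) + (2/p - 1) * ln (2 - p)) x
          :> 1/x + (-2/x^2 * ln (2 - x) + (-1/(2-x)) * (2/x - 1))"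
    using assms by (auto intro!: derivative_eq_intros simp: power2_eq_square)
  moreover have "(-1/(2-x)) * (2/x - 1) = - 1/x" using assms by (simp add: field_simps)
  ultimately show ?thesis unfolding p_star_log_def[abs_def] by simp
qed

lemma p_star_log_continuous_on:
  assumes "0 < a" "b < 2"
  shows "continuous_on {a..b} p_star_log"
proof (rule DERIV_atLeastAtMost_imp_continuous_on)
  fix x assume "a \<le> x" "x \<le> b"
  thus "\<exists>y. DERIV p_star_log x :> y" using assms p_star_log_deriv[of x] by auto
qed

lemma p_star_log_strict_antimono:
  assumes "0 < a" "a < b" "b \<le> 1"
  shows "p_star_log b < p_star_log a"
proof (rule DERIV_neg_imp_decreasing_open[OF assms(2)])
  fix x assume x: "a < x" "x < b"
  have "- 2 * ln (2 - x) / x^2 < 0" using x assms by (simp add: divide_neg_pos)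
  thus "\<exists>y. DERIV p_star_log x :> y \<and> y < 0" using p_star_log_deriv[of x] x assms by auto
next
  show "continuous_on {a..b} p_star_log" using assms by (intro p_star_log_continuous_on) auto
qed

lemma p_star_log_quarter: "p_star_log (1/4) > 0"
proof -
  have "p_star_log (1/4) = ln (1/8) + ln ((7/4::real)^7)" by (simp add: p_star_log_def ln_realpow)
  also have "\<dots> = ln ((7/4)^7 / 8)" by (simp add: ln_div)
  finally show ?thesis by (simp add: power_divide)
qed

lemma p_star_log_half: "p_star_log (1/2) < 0"
proof -
  have "p_star_log (1/2) = ln (1/4) + ln ((3/2::real)^3)" by (simp add: p_star_log_def ln_realpow)
  also have "\<dots> = ln ((3/2)^3 / 4)" by (simp add: ln_div)
  finally show ?thesis by (simp add: power_divide)
qed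

lemma p_star_bounds: "0 < p_star" "p_star < 1/2" "p_star_log p_star = 0"
proof -
  have cont: "continuous_on {1/4..1/2} p_star_log" by (rule p_star_log_continuous_on) auto
  obtain p0 where p0: "1/4 \<le> p0" "p0 \<le> 1/2" "p_star_log p0 = 0"
    using IVT2'[of p_star_log "1/2" 0 "1/4"] p_star_log_half p_star_log_quarter cont by force
  have uniq: "p = p0" if "0 < p" "p \<le> 1" "p_star_log p = 0" for p
    using p_star_log_strict_antimono[of p p0] p_star_log_strict_antimono[of p0 p] that p0
    by (cases p p0 rule: linorder_cases) auto
  have "\<exists>!p::real. 0 < p \<and> p \<le> 1 \<and> (p / 2) powr (1/2) * (2 - p) powr (1 / p - 1/2) = 1"
    using p0 uniq p_star_equation_iff by (intro ex1I[of _ p0]) auto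
  hence "0 < p_star \<and> p_star \<le> 1 \<and> (p_star / 2) powr (1/2) * (2 - p_star) powr (1 / p_star - 1/2) = 1"
    unfolding p_star_def by (rule theI')
  hence "p_star = p0" using uniq p_star_equation_iff by auto
  moreover have "p0 \<noteq> 1/2" using p0(3) p_star_log_half by (metis less_irrefl)
  ultimately show "0 < p_star" "p_star < 1/2" "p_star_log p_star = 0" using p0 by auto
qed

lemma g_fun_le_above_p_star:
  assumes "p_star < p" "p < 1"
  shows "g_fun p \<le> 2 powr (1 - 2/p)"
proof -
  have p: "0 < p" using assms p_star_bounds by simp
  have "p_star_log p < 0" using p_star_log_strict_antimono[of p_star p] assms p_star_bounds by simp
  moreover have "exp (p_star_log p) = (p/2) * (2-p) powr (2/p - 1)"
    using p assms by (simp add: p_star_log_def exp_add powr_def)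
  ultimately have le1: "(p/2) * (2-p) powr (2/p - 1) \<le> 1"
    by (metis exp_less_one_iff less_eq_real_def)
  have "(1 - p/2) powr (2/p-1) = (2-p) powr (2/p-1) / 2 powr (2/p-1)"
    by (simp add: powr_divide[symmetric] diff_divide_distrib)
  also have "\<dots> = (2-p) powr (2/p-1) * 2 powr (1 - 2/p)"
    by (simp add: divide_inverse flip: powr_minus)
  finally have "g_fun p = (p/2) * (2-p) powr (2/p - 1) * 2 powr (1 - 2/p)"
    unfolding g_fun_def by (simp only: mult.assoc)
  also have "\<dots> \<le> 1 * 2 powr (1 - 2/p)" using le1 by (intro mult_right_mono) auto
  finally show ?thesis by simp
qed

text \<open>The weight of \<open>2 \<delta>\<close> in \<open>C(p)\<close>; it is in fact the larger of \<open>g(p)\<close> and \<open>2 powr (1 - 2/p)\<close>.\<close>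

definition tail_weight :: "real \<Rightarrow> real" where
  "tail_weight p = (if p \<le> p_star then g_fun p else 2 powr (1 - 2/p))"

lemma g_fun_le_tail_weight: "0 < p \<Longrightarrow> p < 1 \<Longrightarrow> g_fun p \<le> tail_weight p"
  by (simp add: tail_weight_def g_fun_le_above_p_star)

lemma C_const_eq:
  "C_const \<delta> p = (((2 - \<delta>) powr (1 - 2/p) * g_fun p + 2 * \<delta> * tail_weight p) / (1 - \<delta>)) powr (p/2)"
proof -
  have "(2::real) powr (2 - 2/p) = 2 * 2 powr (1 - 2/p)"
    using powr_add[of "2::real" 1 "1 - 2/p"] by simp
  thus ?thesis by (simp add: C_const_def tail_weight_def algebra_simps)
qed

section \<open>Estimates for decreasing sequences\<close>

text \<open>For \<open>c\<close> decreasing, \<open>\<mu> = c\<^sub>k\<^sub>-\<^sub>1\<close> dominates the tail and is dominated by the head; the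
  estimate is then the AM-GM bound above in the variable \<open>X = k \<mu>\<^sup>p\<close>.\<close>

lemma sorted_tail_energy_le:
  fixes c :: "nat \<Rightarrow> real" and k l :: nat and p \<gamma> :: real
  assumes k: "k > 0" and l: "l > 0" and p: "0 < p" "p < 1" and \<gamma>: "0 \<le> \<gamma>"
    and nn: "\<And>i. 0 \<le> c i" and dec: "\<And>i j. i \<le> j \<Longrightarrow> j < l*k \<Longrightarrow> c j \<le> c i"
  shows "(\<Sum>i\<in>{k..<l*k}. (c i)^2) - \<gamma> * (\<Sum>i<k. (c i)^2)
     \<le> (1+\<gamma>) powr (1 - 2/p) * g_fun p * real k powr (1 - 2/p) * (\<Sum>i<l*k. c i powr p) powr (2/p)"
proof -
  define \<mu> where "\<mu> = c (k-1)"
  define Q where "Q = (\<Sum>i<l*k. c i powr p)"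
  define P where "P = (\<Sum>i<k. c i powr p)"
  define X where "X = real k * \<mu> powr p"
  have \<mu>0: "0 \<le> \<mu>" using nn by (simp add: \<mu>_def)
  have lk: "k \<le> l*k" using l by simp
  have QP: "Q = P + (\<Sum>i\<in>{k..<l*k}. c i powr p)"
    unfolding Q_def P_def using lk by (metis atLeast0LessThan sum.atLeastLessThan_concat zero_le)
  have tail: "c i \<le> \<mu>" if "i \<in> {k..<l*k}" for i
    unfolding \<mu>_def using dec that by auto
  have km: "k - 1 < l*k" using k lk by arith
  have head: "\<mu> \<le> c i" if "i < k" for i
    unfolding \<mu>_def using that km by (intro dec) auto
  have "(\<Sum>i\<in>{k..<l*k}. (c i)^2) \<le> (\<Sum>i\<in>{k..<l*k}. \<mu> powr (2-p) * c i powr p)"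
    by (intro sum_mono square_le_powr_mult_powr) (use nn tail p in auto)
  also have "\<dots> = \<mu> powr (2-p) * (Q - P)" using QP by (simp add: sum_distrib_left)
  also have "\<dots> \<le> \<mu> powr (2-p) * (Q - X)"
  proof -
    have "X = (\<Sum>i<k. \<mu> powr p)" by (simp add: X_def)
    also have "\<dots> \<le> P" unfolding P_def by (intro sum_mono powr_mono2) (use p \<mu>0 head in auto)
    finally show ?thesis by (intro mult_left_mono) auto
  qed
  finally have t: "(\<Sum>i\<in>{k..<l*k}. (c i)^2) \<le> \<mu> powr (2-p) * (Q - X)" .
  have "real k * \<mu>^2 = (\<Sum>i<k. \<mu>^2)" by simp
  also have "\<dots> \<le> (\<Sum>i<k. (c i)^2)" by (intro sum_mono power_mono) (use \<mu>0 head in auto)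
  finally have h: "\<gamma> * (real k * \<mu>^2) \<le> \<gamma> * (\<Sum>i<k. (c i)^2)" using \<gamma> by (intro mult_left_mono)
  have "real k * \<mu>^2 = \<mu> powr (2-p) * X"
    using power2_eq_powr_mult_powr[OF \<mu>0, of p] by (simp add: X_def)
  hence "\<mu> powr (2-p) * (Q - X) - \<gamma> * (real k * \<mu>^2)
        = real k powr (1 - 2/p) * (X powr (2/p-1) * (Q - (1+\<gamma>)*X))"
    using powr_two_minus_eq[OF \<mu>0 _ p(1), of k] k by (simp add: X_def algebra_simps)
  also have "\<dots> \<le> real k powr (1 - 2/p) * ((1+\<gamma>) powr (1 - 2/p) * g_fun p * Q powr (2/p))"
    by (intro mult_left_mono powr_mult_diff_le_g_fun)
       (use p \<gamma> \<mu>0 in \<open>auto simp: X_def Q_def intro!: sum_nonneg\<close>)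
  finally show ?thesis using t h by (simp add: Q_def algebra_simps)
qed

lemma block_end_le: "j < l \<Longrightarrow> j*k + k \<le> l*(k::nat)"
  using mult_le_mono1[of "Suc j" l k] by simp

lemma
  fixes c :: "nat \<Rightarrow> real" and k l j :: nat and p :: real
  assumes k: "k > 0" and p: "0 < p" "p < 1" and j: "1 \<le> j" "j < l"
    and nn: "\<And>i. 0 \<le> c i" and dec: "\<And>i i'. i \<le> i' \<Longrightarrow> i' < l*k \<Longrightarrow> c i' \<le> c i"
  shows sorted_block_energy_le: "(\<Sum>i\<in>{j*k..<j*k+k}. (c i)^2)
      \<le> real k powr (1 - 2/p) * ((\<Sum>i\<in>{(j-1)*k..<(j-1)*k+k}. c i powr p) powr (2/p-1)
                                * (\<Sum>i\<in>{j*k..<j*k+k}. c i powr p))"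
    and sorted_block_powr_sum_antimono:
      "(\<Sum>i\<in>{j*k..<j*k+k}. c i powr p) \<le> (\<Sum>i\<in>{(j-1)*k..<(j-1)*k+k}. c i powr p)"
proof -
  define \<mu> where "\<mu> = c (j*k - 1)"
  define P1 where "P1 = (\<Sum>i\<in>{(j-1)*k..<(j-1)*k+k}. c i powr p)"
  define P2 where "P2 = (\<Sum>i\<in>{j*k..<j*k+k}. c i powr p)"
  have \<mu>0: "0 \<le> \<mu>" using nn by (simp add: \<mu>_def)
  have jk: "(j-1)*k + k = j*k" using j by (cases j) auto
  have jkl: "j*k + k \<le> l*k" using j(2) by (rule block_end_le)
  have up: "c i \<le> \<mu>" if "i \<in> {j*k..<j*k+k}" for i
    unfolding \<mu>_def using that jkl by (intro dec) auto
  have lo: "\<mu> \<le> c i" if "i \<in> {(j-1)*k..<(j-1)*k+k}" for i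
    unfolding \<mu>_def using that jk jkl j k by (intro dec) auto
  have "real k * \<mu> powr p = (\<Sum>i\<in>{(j-1)*k..<(j-1)*k+k}. \<mu> powr p)" by simp
  also have "\<dots> \<le> P1" unfolding P1_def by (intro sum_mono powr_mono2) (use p \<mu>0 lo in auto)
  finally have m1: "real k * \<mu> powr p \<le> P1" .
  have "P2 \<le> (\<Sum>i\<in>{j*k..<j*k+k}. \<mu> powr p)" unfolding P2_def
    by (intro sum_mono powr_mono2) (use p nn up in auto)
  also have "\<dots> = real k * \<mu> powr p" by simp
  finally have m2: "P2 \<le> real k * \<mu> powr p" .
  show "P2 \<le> P1" using m1 m2 by (simp add: P1_def P2_def)
  have "(\<Sum>i\<in>{j*k..<j*k+k}. (c i)^2) \<le> (\<Sum>i\<in>{j*k..<j*k+k}. \<mu> powr (2-p) * c i powr p)"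
    by (intro sum_mono square_le_powr_mult_powr) (use nn up p in auto)
  also have "\<dots> = (\<mu> powr p) powr (2/p - 1) * P2"
  proof -
    have "p*(2/p-1) = 2-p" using p by (simp add: field_simps)
    thus ?thesis by (simp add: P2_def sum_distrib_left powr_powr)
  qed
  also have "\<dots> \<le> (P1 / k) powr (2/p-1) * P2"
    by (intro mult_right_mono powr_mono2)
       (use p m1 k in \<open>auto simp: field_simps P2_def intro!: sum_nonneg\<close>)
  also have "(P1 / k) powr (2/p-1) = real k powr (1 - 2/p) * P1 powr (2/p-1)"
  proof -
    have "(P1 / k) powr (2/p-1) = P1 powr (2/p-1) / real k powr (2/p-1)"
      by (rule powr_divide)
    moreover have "real k powr (1 - 2/p) = inverse (real k powr (2/p-1))" by (simp flip: powr_minus)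
    ultimately show ?thesis by (simp add: divide_inverse)
  qed
  finally show "(\<Sum>i\<in>{j*k..<j*k+k}. (c i)^2) \<le> real k powr (1 - 2/p) * (P1 powr (2/p-1) * P2)"
    by (simp add: mult.assoc)
qed

lemma sum_shift_le:
  fixes x :: "nat \<Rightarrow> real"
  assumes "\<And>j. 0 \<le> x j"
  shows "(\<Sum>j\<in>{Suc m..<l}. x (j-1)) \<le> (\<Sum>j\<in>{m..<l}. x j)"
proof (cases l)
  case (Suc l')
  have "(\<Sum>j\<in>{Suc m..<Suc l'}. x (j-1)) = (\<Sum>i\<in>{m..<l'}. x i)"
    by (subst sum.shift_bounds_Suc_ivl) simp
  also have "\<dots> \<le> (\<Sum>i\<in>{m..<Suc l'}. x i)" by (rule sum_mono2) (use assms in auto)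
  finally show ?thesis using Suc by simp
qed simp

lemma antimono_chain_root_sum_le:
  fixes x :: "nat \<Rightarrow> real" and l :: nat and p Q :: real
  assumes nn: "\<And>j. 0 \<le> x j" and dec: "\<And>j. x (Suc j) \<le> x j" and l: "l > 0"
    and Q: "(\<Sum>j<l. x j) = Q" and p: "1/2 \<le> p" "p < 1"
  shows "(\<Sum>j\<in>{1..<l}. sqrt (x (j-1) powr (2/p-1) * x j)) \<le> 2 powr (1-1/p) * Q powr (1/p)"
proof -
  define b where "b = 1/p - 1"
  have b: "0 \<le> b" "b \<le> 1" using p by (auto simp: b_def field_simps)
  have Q0: "Q = x 0 + (\<Sum>j\<in>{1..<l}. x j)"
    using Q l by (simp add: sum.atLeast_Suc_lessThan atLeast0LessThan[symmetric])
  have x0Q: "x 0 \<le> Q" using Q0 nn by (simp add: sum_nonneg)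
  have bound: "sqrt (x (j-1) powr (2/p-1) * x j) \<le> x 0 powr b * ((x (j-1) + x j)/2)" for j
  proof -
    have e: "2/p - 1 = b + b + 1" by (simp add: b_def)
    have "x (j-1) powr (2/p-1) = x (j-1) powr b * x (j-1) powr b * x (j-1) powr 1"
      unfolding e powr_add by simp
    hence "x (j-1) powr (2/p-1) = (x (j-1) powr b)^2 * x (j-1)"
      using nn by (simp add: power2_eq_square)
    hence "sqrt (x (j-1) powr (2/p-1) * x j) = x (j-1) powr b * sqrt (x (j-1) * x j)"
      by (simp add: real_sqrt_mult mult.assoc)
    also have "\<dots> \<le> x 0 powr b * ((x (j-1) + x j)/2)"
      by (intro mult_mono powr_mono2 arith_geo_mean_sqrt lift_Suc_antimono_le[of x, OF dec])
         (use nn b in auto)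
    finally show ?thesis .
  qed
  have "(\<Sum>j\<in>{1..<l}. sqrt (x (j-1) powr (2/p-1) * x j))
      \<le> (\<Sum>j\<in>{1..<l}. x 0 powr b * ((x (j-1) + x j)/2))"
    by (intro sum_mono bound)
  also have "\<dots> = x 0 powr b * ((\<Sum>j\<in>{1..<l}. x (j-1) + x j) / 2)"
    by (simp add: sum_distrib_left sum_divide_distrib)
  also have "(\<Sum>j\<in>{1..<l}. x (j-1) + x j) = (\<Sum>j\<in>{Suc 0..<l}. x (j-1)) + (\<Sum>j\<in>{1..<l}. x j)"
    by (simp add: sum.distrib)
  also have "x 0 powr b * (((\<Sum>j\<in>{Suc 0..<l}. x (j-1)) + (\<Sum>j\<in>{1..<l}. x j)) / 2)
      \<le> x 0 powr b * ((Q + (Q - x 0)) / 2)"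
  proof -
    have "(\<Sum>j\<in>{Suc 0..<l}. x (j-1)) \<le> Q"
      using sum_shift_le[of x 0 l] nn Q by (simp add: atLeast0LessThan)
    thus ?thesis using Q0 by (intro mult_left_mono divide_right_mono) auto
  qed
  also have "\<dots> = x 0 powr b * (Q - x 0 / 2)" by (simp add: field_simps)
  also have "\<dots> \<le> 2 powr (-b) * Q powr (b+1)" by (rule powr_mult_diff_half_le) (use nn x0Q b in auto)
  also have "\<dots> = 2 powr (1-1/p) * Q powr (1/p)" by (simp add: b_def)
  finally show ?thesis .
qed

lemma antimono_consecutive_powr_sum_le:
  fixes x :: "nat \<Rightarrow> real" and l :: nat and r Q :: real
  assumes nn: "\<And>j. 0 \<le> x j" and dec: "\<And>j. x (Suc j) \<le> x j" and l: "l > 0"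
    and pad: "\<And>j. l \<le> j \<Longrightarrow> x j = 0" and Q: "(\<Sum>j<l. x j) = Q" and r: "2 \<le> r"
  shows "(\<Sum>j\<in>{1..<l}. (x (j-1) + x j) powr r) \<le> 5/4 * Q powr r"
proof (cases "l = 1")
  case True
  thus ?thesis using Q nn by (simp add: sum_nonneg)
next
  case False
  hence l2: "2 \<le> l" using l by simp
  define W where "W = x 1 + x 2"
  have Q0: "Q = x 0 + (\<Sum>j\<in>{1..<l}. x j)"
    using Q l by (simp add: sum.atLeast_Suc_lessThan atLeast0LessThan[symmetric])
  have "(\<Sum>j<3. x j) = (\<Sum>j\<in>{..<3} \<inter> {..<l}. x j)"
    using pad by (intro sum.mono_neutral_right) (auto, meson not_le)
  also have "\<dots> \<le> Q" unfolding Q[symmetric] by (rule sum_mono2) (use nn in auto)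
  finally have x012: "x 0 + x 1 + x 2 \<le> Q" by (simp add: numeral_3_eq_3 numeral_2_eq_2)
  have x10: "x 1 \<le> x 0" and x21: "x 2 \<le> x 1" using dec[of 0] dec[of 1] by (simp_all add: numeral_2_eq_2)
  have "(\<Sum>j\<in>{1..<l}. (x (j-1) + x j) powr r)
      = (x 0 + x 1) powr r + (\<Sum>j\<in>{2..<l}. (x (j-1) + x j) powr r)"
    using l2 by (simp add: sum.atLeast_Suc_lessThan numeral_2_eq_2)
  also have "(\<Sum>j\<in>{2..<l}. (x (j-1) + x j) powr r) \<le> (\<Sum>j\<in>{2..<l}. (x (j-1) + x j) * W powr (r-1))"
  proof (rule sum_mono)
    fix j assume j: "j \<in> {2..<l}"
    have s0: "0 \<le> x (j-1) + x j" using nn by (simp add: add_nonneg_nonneg)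
    have "x (j-1) \<le> x 1" "x j \<le> x 2" using j by (auto intro: lift_Suc_antimono_le[of x, OF dec])
    hence aW: "x (j-1) + x j \<le> W" by (simp add: W_def)
    have "(x (j-1) + x j) powr (r-1) \<le> W powr (r-1)" by (rule powr_mono2) (use aW s0 r in auto)
    moreover have "(x (j-1) + x j) powr r = (x (j-1) + x j) * (x (j-1) + x j) powr (r-1)"
      using powr_add[of "x (j-1) + x j" 1 "r-1"] s0 by simp
    ultimately show "(x (j-1) + x j) powr r \<le> (x (j-1) + x j) * W powr (r-1)"
      using s0 by (simp add: mult_left_mono)
  qed
  also have "(\<Sum>j\<in>{2..<l}. (x (j-1) + x j) * W powr (r-1))
      = W powr (r-1) * ((\<Sum>j\<in>{2..<l}. x (j-1)) + (\<Sum>j\<in>{2..<l}. x j))"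
    by (simp add: sum_distrib_left sum.distrib algebra_simps)
  also have "\<dots> \<le> W powr (r-1) * (2*Q - 2*x 0 - x 1)"
  proof -
    have "(\<Sum>j\<in>{2..<l}. x (j-1)) \<le> (\<Sum>j\<in>{1..<l}. x j)"
      using sum_shift_le[OF nn, where m=1 and l=l] by (simp add: numeral_2_eq_2)
    moreover have "(\<Sum>j\<in>{1..<l}. x j) = x 1 + (\<Sum>j\<in>{2..<l}. x j)"
      using l2 by (simp add: sum.atLeast_Suc_lessThan numeral_2_eq_2)
    ultimately show ?thesis using Q0 by (intro mult_left_mono) auto
  qed
  also have "(x 0 + x 1) powr r + W powr (r-1) * (2*Q - 2*x 0 - x 1) \<le> 5/4 * Q powr r"
    by (rule two_block_powr_le) (use nn[of 1] nn[of 2] x012 x10 x21 r in \<open>auto simp: W_def\<close>)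
  finally show ?thesis by simp
qed

lemma antimono_chain_root_sum_le_g_fun:
  fixes x :: "nat \<Rightarrow> real" and l :: nat and p Q :: real
  assumes nn: "\<And>j. 0 \<le> x j" and dec: "\<And>j. x (Suc j) \<le> x j" and l: "l > 0"
    and pad: "\<And>j. l \<le> j \<Longrightarrow> x j = 0" and Q: "(\<Sum>j<l. x j) = Q" and p: "0 < p" "p \<le> 1/2"
  shows "(\<Sum>j\<in>{1..<l}. sqrt (x (j-1) powr (2/p-1) * x j)) \<le> 5/4 * sqrt (g_fun p) * Q powr (1/p)"
proof -
  have bound: "sqrt (x (j-1) powr (2/p-1) * x j) \<le> sqrt (g_fun p) * (x (j-1) + x j) powr (1/p)" for j
  proof -
    have "x (j-1) powr (2/p-1) * ((x (j-1) + x j) - 1 * x (j-1))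
        \<le> 1 powr (1 - 2/p) * g_fun p * (x (j-1) + x j) powr (2/p)"
      by (rule powr_mult_diff_le_g_fun) (use p nn in \<open>auto intro: add_nonneg_nonneg\<close>)
    hence "sqrt (x (j-1) powr (2/p-1) * x j) \<le> sqrt (g_fun p * (x (j-1) + x j) powr (2/p))"
      by (intro real_sqrt_le_mono) simp
    also have "\<dots> = sqrt (g_fun p) * (x (j-1) + x j) powr (1/p)"
      using powr_half_sqrt_powr[of "x (j-1) + x j" "2/p"] nn by (simp add: real_sqrt_mult add_nonneg_nonneg)
    finally show ?thesis .
  qed
  have "(\<Sum>j\<in>{1..<l}. sqrt (x (j-1) powr (2/p-1) * x j))
      \<le> sqrt (g_fun p) * (\<Sum>j\<in>{1..<l}. (x (j-1) + x j) powr (1/p))"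
    unfolding sum_distrib_left by (intro sum_mono bound)
  also have "\<dots> \<le> sqrt (g_fun p) * (5/4 * Q powr (1/p))"
    by (intro mult_left_mono antimono_consecutive_powr_sum_le[OF nn dec l pad Q])
       (use p g_fun_nonneg[OF p(1)] in \<open>auto simp: field_simps\<close>)
  finally show ?thesis by simp
qed

lemma antimono_chain_root_sum_sq_le:
  fixes x :: "nat \<Rightarrow> real" and l :: nat and p Q :: real
  assumes nn: "\<And>j. 0 \<le> x j" and dec: "\<And>j. x (Suc j) \<le> x j" and l: "l > 0"
    and pad: "\<And>j. l \<le> j \<Longrightarrow> x j = 0" and Q: "(\<Sum>j<l. x j) = Q" and p: "0 < p" "p < 1"
  shows "(\<Sum>j\<in>{1..<l}. sqrt (x (j-1) powr (2/p-1) * x j))^2 \<le> 2 * tail_weight p * Q powr (2/p)"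
proof -
  define S where "S = (\<Sum>j\<in>{1..<l}. sqrt (x (j-1) powr (2/p-1) * x j))"
  have S0: "0 \<le> S" unfolding S_def using nn by (intro sum_nonneg) simp
  have g0: "0 \<le> g_fun p" using p(1) by (rule g_fun_nonneg)
  have sqQ: "(Q powr (1/p))^2 = Q powr (2/p)" by (simp add: power2_eq_square flip: powr_add)
  have small: "S^2 \<le> 25/16 * g_fun p * Q powr (2/p)" if "p \<le> 1/2"
  proof -
    have "S^2 \<le> (5/4 * sqrt (g_fun p) * Q powr (1/p))^2" unfolding S_def
      using S0 antimono_chain_root_sum_le_g_fun[OF nn dec l pad Q p(1) that]
      by (intro power_mono) (auto simp: S_def)
    also have "\<dots> = (5/4)^2 * (sqrt (g_fun p))^2 * (Q powr (1/p))^2" by (simp only: power_mult_distrib)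
    also have "\<dots> = 25/16 * g_fun p * (Q powr (1/p))^2" using g0 by (simp add: power_divide)
    finally show ?thesis using sqQ by simp
  qed
  show ?thesis
  proof (cases "p \<le> p_star")
    case True
    hence "S^2 \<le> 25/16 * g_fun p * Q powr (2/p)" using p_star_bounds by (intro small) auto
    also have "\<dots> \<le> 2 * g_fun p * Q powr (2/p)" using g0 by (intro mult_right_mono) auto
    finally show ?thesis using True by (simp add: S_def tail_weight_def)
  next
    case False
    have tw: "tail_weight p = 2 powr (1 - 2/p)" using False by (simp add: tail_weight_def)
    show ?thesis
    proof (cases "p \<le> 1/2")
      case True
      have "S^2 \<le> 25/16 * g_fun p * Q powr (2/p)" using True by (rule small)
      also have "\<dots> \<le> 2 * tail_weight p * Q powr (2/p)"
        using g_fun_le_tail_weight[OF p] g0 by (intro mult_right_mono) auto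
      finally show ?thesis by (simp add: S_def)
    next
      case False
      have "S^2 \<le> (2 powr (1-1/p) * Q powr (1/p))^2" unfolding S_def
        using S0 antimono_chain_root_sum_le[OF nn dec l Q _ p(2)] False
        by (intro power_mono) (auto simp: S_def)
      also have "\<dots> = 2 * 2 powr (1 - 2/p) * Q powr (2/p)"
      proof -
        have "(2 powr (1-1/p))^2 = (2::real) powr (1 + (1 - 2/p))"
          by (simp add: power2_eq_square flip: powr_add)
        also have "\<dots> = 2 * 2 powr (1 - 2/p)" by (simp only: powr_add) simp
        finally show ?thesis using sqQ by (simp add: power_mult_distrib)
      qed
      finally show ?thesis using tw by (simp add: S_def)
    qed
  qed
qed

text \<open>Here \<open>a\<close>, \<open>b\<close> are the energies of \<open>h\<close> on \<open>T\<^sub>0\<close>, \<open>T\<^sub>1\<close>, and \<open>t\<close>, \<open>B\<close> the energy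
  and the sum of the block norms of the rest.\<close>

lemma head_energy_le:
  fixes D \<delta> a b \<epsilon> T t B E G K :: real
  assumes D: "D = 1 - \<delta>" and \<delta>: "1 \<le> 2*\<delta>" and nn: "0 \<le> \<epsilon>" "0 \<le> T" "0 \<le> E"
    and head: "D*(a + b) \<le> (2*\<epsilon> + T)^2" and tail: "T^2 \<le> t + \<delta>*B^2"
    and tb: "t - D*b \<le> E" and tG: "t \<le> G" and BK: "\<delta>*B^2 \<le> K" and GK: "G \<le> K"
  shows "D*a \<le> (2 * sqrt 2 * \<epsilon> + sqrt (E + K))^2"
proof -
  define Y where "Y = sqrt (E + K)"
  have "0 \<le> \<delta>*B^2" using \<delta> by simp
  hence K0: "0 \<le> K" using BK by linarith
  have Y2: "Y^2 = E + K" using nn K0 by (simp add: Y_def)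
  have "T^2 \<le> (sqrt 2 * Y)^2" using tail tG GK BK Y2 nn by (simp add: power_mult_distrib)
  hence TY: "T \<le> sqrt 2 * Y" by (rule power2_le_imp_le) (use nn K0 in \<open>simp add: Y_def\<close>)
  have "D*(a + b) = D*a + D*b" by (simp add: algebra_simps)
  hence "D*a \<le> (2*\<epsilon> + T)^2 - (t + \<delta>*B^2) + E + K" using head tb BK by linarith
  also have "(2*\<epsilon> + T)^2 = 4*\<epsilon>^2 + 4*(\<epsilon>*T) + T^2" by (simp add: power2_eq_square algebra_simps)
  also have "4*\<epsilon>^2 + 4*(\<epsilon>*T) + T^2 - (t + \<delta>*B^2) + E + K \<le> 4*\<epsilon>^2 + 4*(\<epsilon>*T) + Y^2"
    using tail Y2 by linarith
  also have "\<dots> \<le> 8*\<epsilon>^2 + 4*(\<epsilon>*(sqrt 2*Y)) + Y^2"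
    using mult_left_mono[OF TY nn(1)] zero_le_power2[of \<epsilon>] by linarith
  also have "\<dots> = (2 * sqrt 2 * \<epsilon> + Y)^2" by (simp add: power2_eq_square algebra_simps)
  finally show ?thesis by (simp add: Y_def)
qed

lemma head_powr_le:
  fixes D a \<epsilon> N Q k p :: real
  assumes D: "D > 0" and a: "0 \<le> a" and \<epsilon>: "0 \<le> \<epsilon>" and N: "0 \<le> N" and Q: "0 \<le> Q"
    and k: "k > 0" and p: "0 < p" "p < 1"
    and H: "D*a \<le> (2 * sqrt 2 * \<epsilon> + sqrt (N * (k powr (1 - 2/p) * Q powr (2/p))))^2"
  shows "k powr (1 - p/2) * a powr (p/2)
     \<le> 2 powr (3*p/2) / D powr (p/2) * k powr (1 - p/2) * \<epsilon> powr p + (N/D) powr (p/2) * Q"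
proof -
  define Z where "Z = k powr (1 - 2/p) * Q powr (2/p)"
  define X where "X = 2 * sqrt 2 * \<epsilon> + sqrt (N*Z)"
  have X0: "0 \<le> X" using \<epsilon> N by (simp add: X_def Z_def)
  have "a \<le> X^2 / D" using H D by (simp add: X_def Z_def field_simps)
  hence "a powr (p/2) \<le> (X^2 / D) powr (p/2)" using a p by (intro powr_mono2) auto
  also have "\<dots> = (X^2) powr (p/2) / D powr (p/2)" using D by (simp add: powr_divide)
  also have "(X^2) powr (p/2) = X powr p"
    using X0 powr_powr[of X 2 "p/2"] by (cases "X = 0") (simp_all add: powr_realpow)
  finally have aX: "a powr (p/2) \<le> X powr p / D powr (p/2)" .
  have "X powr p \<le> (2 * sqrt 2 * \<epsilon>) powr p + sqrt (N*Z) powr p"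
    unfolding X_def by (rule powr_add_le_add_powr) (use \<epsilon> N p in \<open>auto simp: Z_def\<close>)
  also have "(2 * sqrt 2 * \<epsilon>) powr p = 2 powr (3*p/2) * \<epsilon> powr p"
  proof -
    have "2 * sqrt 2 = (2::real) powr (3/2)"
      using powr_add[of "2::real" 1 "1/2"] by (simp add: powr_half_sqrt)
    thus ?thesis using \<epsilon> by (simp add: powr_mult powr_powr)
  qed
  also have "sqrt (N*Z) powr p = N powr (p/2) * (k powr (p/2 - 1) * Q)"
  proof -
    have "sqrt (N*Z) powr p = N powr (p/2) * Z powr (p/2)"
      using N Q by (simp add: Z_def powr_half_sqrt[symmetric] powr_powr powr_mult)
    also have "Z powr (p/2) = k powr ((1 - 2/p)*(p/2)) * Q powr ((2/p)*(p/2))"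
      using k Q by (simp add: Z_def powr_mult powr_powr)
    also have "(1 - 2/p)*(p/2) = p/2 - 1" using p by (simp add: field_simps)
    also have "(2/p)*(p/2) = 1" using p by simp
    finally show ?thesis using Q by simp
  qed
  finally have Xp: "X powr p \<le> 2 powr (3*p/2) * \<epsilon> powr p + N powr (p/2) * (k powr (p/2 - 1) * Q)" .
  have "k powr (1 - p/2) * a powr (p/2)
      \<le> k powr (1 - p/2) * ((2 powr (3*p/2) * \<epsilon> powr p + N powr (p/2) * (k powr (p/2 - 1) * Q)) / D powr (p/2))"
    using aX Xp D by (intro mult_left_mono order_trans[OF aX] divide_right_mono) auto
  also have "\<dots> = 2 powr (3*p/2) / D powr (p/2) * k powr (1 - p/2) * \<epsilon> powr p
      + (N powr (p/2) / D powr (p/2)) * (k powr (1 - p/2) * k powr (p/2 - 1)) * Q"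
    using D by (simp add: field_simps)
  also have "k powr (1 - p/2) * k powr (p/2 - 1) = 1" using k by (simp flip: powr_add)
  also have "N powr (p/2) / D powr (p/2) = (N/D) powr (p/2)" using N D by (simp add: powr_divide)
  finally show ?thesis by simp
qed

lemma sorted_block_root_sum_sq_le:
  fixes c :: "nat \<Rightarrow> real" and k l :: nat and p :: real
  assumes k: "k > 0" and l: "l > 0" and p: "0 < p" "p < 1"
    and nn: "\<And>i. 0 \<le> c i" and dec: "\<And>i j. i \<le> j \<Longrightarrow> j < l*k \<Longrightarrow> c j \<le> c i"
  shows "(\<Sum>j\<in>{1..<l}. sqrt (\<Sum>i\<in>{j*k..<j*k+k}. (c i)^2))^2
      \<le> 2 * tail_weight p * (real k powr (1 - 2/p) * (\<Sum>i<l*k. c i powr p) powr (2/p))"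
proof -
  define P where "P j = (\<Sum>i\<in>{j*k..<j*k+k}. c i powr p)" for j
  define x where "x j = (if j < l then P j else 0)" for j
  define S where "S = (\<Sum>j\<in>{1..<l}. sqrt (x (j-1) powr (2/p-1) * x j))"
  define \<kappa> where "\<kappa> = real k powr (1/2 - 1/p)"
  have \<kappa>2: "\<kappa>^2 = real k powr (1 - 2/p)" by (simp add: \<kappa>_def power2_eq_square flip: powr_add)
  have x_nn: "0 \<le> x j" for j by (simp add: x_def P_def sum_nonneg)
  have x_dec: "x (Suc j) \<le> x j" for j
  proof (cases "Suc j < l")
    case True
    have "P (Suc j) \<le> P (Suc j - 1)" unfolding P_def
      by (rule sorted_block_powr_sum_antimono[OF k p _ True nn dec]) auto
    thus ?thesis using True by (simp add: x_def)
  qed (simp add: x_def P_def sum_nonneg)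
  have "(\<Sum>j<l. x j) = (\<Sum>j<l. P j)" by (simp add: x_def)
  also have "\<dots> = (\<Sum>i<l*k. c i powr p)" unfolding P_def by (rule sum.nat_group)
  finally have x_sum: "(\<Sum>j<l. x j) = (\<Sum>i<l*k. c i powr p)" .
  have "sqrt (\<Sum>i\<in>{j*k..<j*k+k}. (c i)^2) \<le> \<kappa> * sqrt (x (j-1) powr (2/p-1) * x j)"
    if "j \<in> {1..<l}" for j
  proof -
    have j: "1 \<le> j" "j < l" "j - 1 < l" using that by auto
    have "(\<Sum>i\<in>{j*k..<j*k+k}. (c i)^2) \<le> \<kappa>^2 * (x (j-1) powr (2/p-1) * x j)"
      using sorted_block_energy_le[OF k p j(1,2) nn dec] j by (simp add: \<kappa>2 x_def P_def)
    hence "sqrt (\<Sum>i\<in>{j*k..<j*k+k}. (c i)^2) \<le> sqrt (\<kappa>^2 * (x (j-1) powr (2/p-1) * x j))"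
      by (rule real_sqrt_le_mono)
    thus ?thesis by (simp add: real_sqrt_mult \<kappa>_def)
  qed
  hence "(\<Sum>j\<in>{1..<l}. sqrt (\<Sum>i\<in>{j*k..<j*k+k}. (c i)^2)) \<le> \<kappa> * S"
    unfolding S_def sum_distrib_left by (rule sum_mono)
  hence "(\<Sum>j\<in>{1..<l}. sqrt (\<Sum>i\<in>{j*k..<j*k+k}. (c i)^2))^2 \<le> (\<kappa> * S)^2"
    by (rule power_mono) (simp add: sum_nonneg)
  also have "\<dots> = real k powr (1 - 2/p) * S^2" by (simp add: power_mult_distrib \<kappa>2)
  also have "\<dots> \<le> real k powr (1 - 2/p) * (2 * tail_weight p * (\<Sum>i<l*k. c i powr p) powr (2/p))"
    unfolding S_def by (intro mult_left_mono antimono_chain_root_sum_sq_le[OF _ x_dec l _ x_sum p])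
                       (auto simp: x_nn x_def P_def sum_nonneg)
  finally show ?thesis by (simp add: algebra_simps)
qed

lemma sorted_tail_estimate:
  fixes c :: "nat \<Rightarrow> real" and k l :: nat and p \<delta> \<epsilon> a T :: real
  assumes k: "k > 0" and l: "l > 0" and p: "0 < p" "p < 1"
    and \<delta>: "sqrt 2 / 2 \<le> \<delta>" "\<delta> < 1" and \<epsilon>: "0 \<le> \<epsilon>" and a: "0 \<le> a" and T: "0 \<le> T"
    and nn: "\<And>i. 0 \<le> c i" and dec: "\<And>i j. i \<le> j \<Longrightarrow> j < l*k \<Longrightarrow> c j \<le> c i"
    and head: "(1-\<delta>) * (a + (\<Sum>i<k. (c i)^2)) \<le> (2*\<epsilon> + T)^2"
    and tail: "T^2 \<le> (\<Sum>i\<in>{k..<l*k}. (c i)^2)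
                    + \<delta> * (\<Sum>j\<in>{1..<l}. sqrt (\<Sum>i\<in>{j*k..<j*k+k}. (c i)^2))^2"
  shows "real k powr (1 - p/2) * a powr (p/2)
     \<le> 2 powr (3*p/2) / (1-\<delta>) powr (p/2) * real k powr (1 - p/2) * \<epsilon> powr p
       + C_const \<delta> p * (\<Sum>i<l*k. c i powr p)"
proof -
  define Q where "Q = (\<Sum>i<l*k. c i powr p)"
  define Z where "Z = real k powr (1 - 2/p) * Q powr (2/p)"
  define g where "g = g_fun p"
  define w where "w = tail_weight p"
  have Z0: "0 \<le> Z" by (simp add: Z_def)
  have gw: "g \<le> w" "0 \<le> g" using g_fun_le_tail_weight[OF p] g_fun_nonneg[OF p(1)] by (simp_all add: g_def w_def)
  have "1 \<le> sqrt (2::real)" by simp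
  hence \<delta>2: "1 \<le> 2*\<delta>" using \<delta>(1) by linarith
  have tail_energy: "(\<Sum>i\<in>{k..<l*k}. (c i)^2) - \<gamma> * (\<Sum>i<k. (c i)^2) \<le> (1+\<gamma>) powr (1 - 2/p) * g * Z"
    if "0 \<le> \<gamma>" for \<gamma>
    using sorted_tail_energy_le[OF k l p that nn dec] by (simp add: g_def Z_def Q_def mult.assoc)
  have "(1-\<delta>) * a \<le> (2 * sqrt 2 * \<epsilon> + sqrt ((2-\<delta>) powr (1 - 2/p) * g * Z + 2*\<delta>*w*Z))^2"
  proof (rule head_energy_le[OF refl \<delta>2 \<epsilon> T _ head tail])
    show "(\<Sum>i\<in>{k..<l*k}. (c i)^2) - (1-\<delta>) * (\<Sum>i<k. (c i)^2) \<le> (2-\<delta>) powr (1 - 2/p) * g * Z"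
      using tail_energy[of "1-\<delta>"] \<delta> by simp
    show "(\<Sum>i\<in>{k..<l*k}. (c i)^2) \<le> g * Z" using tail_energy[of 0] by simp
    have "(\<Sum>j\<in>{1..<l}. sqrt (\<Sum>i\<in>{j*k..<j*k+k}. (c i)^2))^2 \<le> 2 * w * Z"
      using sorted_block_root_sum_sq_le[OF k l p nn dec] by (simp add: w_def Z_def Q_def)
    thus "\<delta> * (\<Sum>j\<in>{1..<l}. sqrt (\<Sum>i\<in>{j*k..<j*k+k}. (c i)^2))^2 \<le> 2*\<delta>*w*Z"
      using \<delta>2 by (simp add: mult_left_mono mult.assoc)
    have "1 * w \<le> 2*\<delta>*w" using \<delta>2 gw by (intro mult_right_mono) auto
    thus "g * Z \<le> 2*\<delta>*w*Z" using gw Z0 by (intro mult_right_mono) auto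
  qed (use gw Z0 \<delta> in simp)
  hence "(1-\<delta>) * a \<le> (2 * sqrt 2 * \<epsilon> + sqrt (((2-\<delta>) powr (1 - 2/p) * g + 2*\<delta>*w)
                                              * (real k powr (1 - 2/p) * Q powr (2/p))))^2"
    by (simp add: Z_def algebra_simps)
  from head_powr_le[OF _ a \<epsilon> _ _ _ p this] show ?thesis
    using k \<delta> gw \<delta>2 by (simp add: C_const_eq Q_def g_def w_def sum_nonneg)
qed

section \<open>Vectors and the restricted isometry property\<close>

definition sqnorm :: "nat \<Rightarrow> (nat \<Rightarrow> real) \<Rightarrow> real" where
  "sqnorm n z = (\<Sum>i<n. (z i)^2)"

definition dotp :: "nat \<Rightarrow> (nat \<Rightarrow> real) \<Rightarrow> (nat \<Rightarrow> real) \<Rightarrow> real" where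
  "dotp m u v = (\<Sum>i<m. u i * v i)"

definition has_rip :: "nat \<Rightarrow> nat \<Rightarrow> (nat \<Rightarrow> nat \<Rightarrow> real) \<Rightarrow> nat \<Rightarrow> real \<Rightarrow> bool" where
  "has_rip m n A s \<delta> \<longleftrightarrow> (\<forall>z. sparse n s z \<longrightarrow>
     (1 - \<delta>) * sqnorm n z \<le> sqnorm m (mat_vec m n A z) \<and>
     sqnorm m (mat_vec m n A z) \<le> (1 + \<delta>) * sqnorm n z)"

lemma sqnorm_nonneg [simp]: "0 \<le> sqnorm n z"
  by (simp add: sqnorm_def sum_nonneg)

lemma norm2_eq_sqrt_sqnorm: "norm2 n z = sqrt (sqnorm n z)"
  by (simp add: norm2_def sqnorm_def)

lemma power2_norm2: "(norm2 n z)^2 = sqnorm n z"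
  by (simp add: norm2_eq_sqrt_sqnorm)

lemma sqnorm_eq_0D: "sqnorm n z = 0 \<Longrightarrow> i < n \<Longrightarrow> z i = 0"
  unfolding sqnorm_def by (subst (asm) sum_nonneg_eq_0_iff) auto

lemma sqnorm_lincomb:
  "sqnorm m (\<lambda>i. a * X i + b * Y i) = a^2 * sqnorm m X + 2*a*b * dotp m X Y + b^2 * sqnorm m Y"
  by (simp add: sqnorm_def dotp_def power2_eq_square sum.distrib sum_distrib_left algebra_simps)

lemma sqnorm_lincomb_disjoint:
  assumes "\<And>i. u i * v i = 0"
  shows "sqnorm n (\<lambda>i. a * u i + b * v i) = a^2 * sqnorm n u + b^2 * sqnorm n v"
proof -
  have "dotp n u v = 0" unfolding dotp_def by (rule sum.neutral) (use assms in auto)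
  thus ?thesis by (simp add: sqnorm_lincomb)
qed

lemma sqnorm_sum:
  assumes "finite J"
  shows "sqnorm m (\<lambda>i. \<Sum>j\<in>J. X j i) = (\<Sum>j\<in>J. \<Sum>j'\<in>J. dotp m (X j) (X j'))"
proof -
  have "sqnorm m (\<lambda>i. \<Sum>j\<in>J. X j i) = (\<Sum>i<m. \<Sum>j\<in>J. \<Sum>j'\<in>J. X j i * X j' i)"
    by (simp add: sqnorm_def power2_eq_square sum_product)
  also have "\<dots> = (\<Sum>j\<in>J. \<Sum>i<m. \<Sum>j'\<in>J. X j i * X j' i)" by (rule sum.swap)
  also have "\<dots> = (\<Sum>j\<in>J. \<Sum>j'\<in>J. \<Sum>i<m. X j i * X j' i)" by (intro sum.cong refl sum.swap)
  finally show ?thesis by (simp add: dotp_def)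
qed

lemma sqnorm_restrict_vec:
  assumes "T \<subseteq> {..<n}"
  shows "sqnorm n (restrict_vec h T) = (\<Sum>i\<in>T. (h i)^2)"
proof -
  have "sqnorm n (restrict_vec h T) = (\<Sum>i\<in>{..<n} \<inter> T. (h i)^2)"
    unfolding sqnorm_def sum.inter_restrict[OF finite_lessThan] by (intro sum.cong) (auto simp: restrict_vec_def)
  also have "{..<n} \<inter> T = T" using assms by auto
  finally show ?thesis .
qed

lemma abs_dotp_le: "\<bar>dotp m X Y\<bar> \<le> sqrt (sqnorm m X) * sqrt (sqnorm m Y)"
proof -
  have "(dotp m X Y)^2 \<le> sqnorm m X * sqnorm m Y"
    unfolding dotp_def sqnorm_def by (rule Cauchy_Schwarz_ineq_sum)
  hence "sqrt ((dotp m X Y)^2) \<le> sqrt (sqnorm m X * sqnorm m Y)" by (rule real_sqrt_le_mono)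
  thus ?thesis by (simp add: real_sqrt_mult)
qed

lemma norm2_diff_le: "norm2 m (\<lambda>i. X i - Y i) \<le> norm2 m X + norm2 m Y"
proof -
  have "sqnorm m (\<lambda>i. X i - Y i) = sqnorm m X - 2 * dotp m X Y + sqnorm m Y"
    using sqnorm_lincomb[of m 1 X "-1" Y] by simp
  also have "\<dots> \<le> (sqrt (sqnorm m X) + sqrt (sqnorm m Y))^2"
    using abs_dotp_le[of m X Y] by (simp add: power2_eq_square algebra_simps)
  finally have "sqrt (sqnorm m (\<lambda>i. X i - Y i)) \<le> sqrt ((sqrt (sqnorm m X) + sqrt (sqnorm m Y))^2)"
    by (rule real_sqrt_le_mono)
  thus ?thesis by (simp add: norm2_eq_sqrt_sqnorm)
qed

lemma mat_vec_lincomb: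
  "mat_vec m n A (\<lambda>i. a * u i + b * v i) = (\<lambda>i. a * mat_vec m n A u i + b * mat_vec m n A v i)"
  by (auto simp: mat_vec_def sum.distrib sum_distrib_left algebra_simps)

lemma mat_vec_cong: "(\<And>i. i < n \<Longrightarrow> u i = v i) \<Longrightarrow> mat_vec m n A u = mat_vec m n A v"
  by (auto simp: mat_vec_def intro!: sum.cong)

lemma mat_vec_eq_zero: "(\<And>i. i < n \<Longrightarrow> u i = 0) \<Longrightarrow> mat_vec m n A u = (\<lambda>i. 0)"
  by (auto simp: mat_vec_def)

lemma mat_vec_sum:
  assumes "finite J"
  shows "mat_vec m n A (\<lambda>i. \<Sum>j\<in>J. t j i) = (\<lambda>i. \<Sum>j\<in>J. mat_vec m n A (t j) i)"
  using assms by (auto simp: mat_vec_def sum_distrib_left intro!: sum.swap)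

lemma sparse_if_support_subset:
  assumes "\<And>i. i < n \<Longrightarrow> z i \<noteq> 0 \<Longrightarrow> i \<in> S" "finite S" "card S \<le> s"
  shows "sparse n s z"
proof -
  have "card {i. i < n \<and> z i \<noteq> 0} \<le> card S" using assms by (intro card_mono) auto
  thus ?thesis using assms by (simp add: sparse_def)
qed

lemma sparse_restrict_vec: "finite S \<Longrightarrow> card S \<le> s \<Longrightarrow> sparse n s (restrict_vec h S)"
  by (rule sparse_if_support_subset) (auto simp: restrict_vec_def split: if_splits)

lemma sparse_mono: "sparse n s z \<Longrightarrow> s \<le> s' \<Longrightarrow> sparse n s' z"
  by (simp add: sparse_def)

lemma sparse_lincomb:
  assumes "sparse n k u" "sparse n k v"
  shows "sparse n (2*k) (\<lambda>i. a * u i + b * v i)"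
proof (rule sparse_if_support_subset)
  let ?S = "{i. i < n \<and> u i \<noteq> 0} \<union> {i. i < n \<and> v i \<noteq> 0}"
  show "finite ?S" by auto
  show "\<And>i. i < n \<Longrightarrow> a * u i + b * v i \<noteq> 0 \<Longrightarrow> i \<in> ?S" by auto
  have "card ?S \<le> card {i. i < n \<and> u i \<noteq> 0} + card {i. i < n \<and> v i \<noteq> 0}" by (rule card_Un_le)
  thus "card ?S \<le> 2*k" using assms by (simp add: sparse_def)
qed

lemma sqnorm_mat_vec_le: "sqnorm m (mat_vec m n A w) \<le> (\<Sum>i<m. \<Sum>j<n. (A i j)^2) * sqnorm n w"
proof -
  have "sqnorm m (mat_vec m n A w) = (\<Sum>i<m. (\<Sum>j<n. A i j * w j)^2)"
    by (simp add: sqnorm_def mat_vec_def)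
  also have "\<dots> \<le> (\<Sum>i<m. (\<Sum>j<n. (A i j)^2) * (\<Sum>j<n. (w j)^2))"
    by (intro sum_mono Cauchy_Schwarz_ineq_sum)
  finally show ?thesis by (simp add: sqnorm_def sum_distrib_right)
qed

text \<open>The set of admissible constants in \<open>ric\<close> is nonempty (it contains
  \<open>1 + \<Sum>\<^sub>i\<^sub>j A\<^sub>i\<^sub>j\<^sup>2\<close>), so its infimum is again admissible.\<close>

lemma has_rip_ric: "has_rip m n A s (ric m n A s)"
  unfolding has_rip_def
proof (intro allI impI)
  fix z assume z: "sparse n s z"
  define D where "D = {\<delta>. \<forall>z. sparse n s z \<longrightarrow>
      (1 - \<delta>) * (norm2 n z)\<^sup>2 \<le> (norm2 m (mat_vec m n A z))\<^sup>2 \<and>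
      (norm2 m (mat_vec m n A z))\<^sup>2 \<le> (1 + \<delta>) * (norm2 n z)\<^sup>2}"
  define M where "M = (\<Sum>i<m. \<Sum>j<n. (A i j)^2)"
  have M0: "0 \<le> M" by (simp add: M_def sum_nonneg)
  have upper: "sqnorm m (mat_vec m n A w) \<le> M * sqnorm n w" for w
    unfolding M_def by (rule sqnorm_mat_vec_le)
  have "1 + M \<in> D"
    unfolding D_def power2_norm2
  proof (intro CollectI allI impI conjI)
    fix w :: "nat \<Rightarrow> real"
    show "(1 - (1 + M)) * sqnorm n w \<le> sqnorm m (mat_vec m n A w)"
      using M0 by (simp add: algebra_simps) (meson mult_nonneg_nonneg order_trans neg_le_0_iff_le sqnorm_nonneg)
    show "sqnorm m (mat_vec m n A w) \<le> (1 + (1 + M)) * sqnorm n w"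
      using upper[of w] sqnorm_nonneg[of n w] by (smt (verit) mult_right_mono)
  qed
  hence D: "D \<noteq> {}" by auto
  show "(1 - ric m n A s) * sqnorm n z \<le> sqnorm m (mat_vec m n A z) \<and>
        sqnorm m (mat_vec m n A z) \<le> (1 + ric m n A s) * sqnorm n z"
  proof (cases "sqnorm n z = 0")
    case True
    hence "mat_vec m n A z = (\<lambda>i. 0)" using sqnorm_eq_0D by (intro mat_vec_eq_zero) auto
    thus ?thesis using True by (simp add: sqnorm_def)
  next
    case False
    hence a: "sqnorm n z > 0" using sqnorm_nonneg[of n z] by linarith
    define b where "b = sqnorm m (mat_vec m n A z)"
    have "1 - b / sqnorm n z \<le> d \<and> b / sqnorm n z - 1 \<le> d" if "d \<in> D" for d
    proof -
      have "(1 - d) * sqnorm n z \<le> b \<and> b \<le> (1 + d) * sqnorm n z"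
        using that z unfolding D_def b_def by (auto simp: power2_norm2)
      thus ?thesis using a by (simp add: field_simps)
    qed
    hence "1 - b / sqnorm n z \<le> Inf D" "b / sqnorm n z - 1 \<le> Inf D"
      using D by (auto intro: cInf_greatest)
    thus ?thesis using a unfolding ric_def D_def[symmetric] b_def[symmetric] by (simp add: field_simps)
  qed
qed

text \<open>Polarization: apply the RIP to \<open>\<parallel>v\<parallel> u \<plusminus> \<parallel>u\<parallel> v\<close>, whose squared norm is
  \<open>2 \<parallel>u\<parallel>\<^sup>2 \<parallel>v\<parallel>\<^sup>2\<close> by disjointness, and subtract.\<close>

lemma has_rip_abs_dotp_le:
  assumes rip: "has_rip m n A (2*k) \<delta>" and disj: "\<And>i. u i * v i = 0"
    and su: "sparse n k u" and sv: "sparse n k v"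
  shows "\<bar>dotp m (mat_vec m n A u) (mat_vec m n A v)\<bar> \<le> \<delta> * sqrt (sqnorm n u) * sqrt (sqnorm n v)"
proof -
  define Nu where "Nu = sqrt (sqnorm n u)"
  define Nv where "Nv = sqrt (sqnorm n v)"
  define ip where "ip = dotp m (mat_vec m n A u) (mat_vec m n A v)"
  define Su where "Su = sqnorm m (mat_vec m n A u)"
  define Sv where "Sv = sqnorm m (mat_vec m n A v)"
  have Nu2: "Nu^2 = sqnorm n u" and Nv2: "Nv^2 = sqnorm n v" by (simp_all add: Nu_def Nv_def)
  show ?thesis
  proof (cases "sqnorm n u = 0 \<or> sqnorm n v = 0")
    case True
    hence "mat_vec m n A u = (\<lambda>i. 0) \<or> mat_vec m n A v = (\<lambda>i. 0)"
      by (auto intro: mat_vec_eq_zero dest: sqnorm_eq_0D)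
    thus ?thesis using True by (auto simp: dotp_def)
  next
    case False
    hence pos: "0 < Nu * Nv" using sqnorm_nonneg[of n u] sqnorm_nonneg[of n v]
      by (simp add: Nu_def Nv_def order_le_neq_trans)
    have key: "(1-\<delta>)*(2*(Nu^2*Nv^2)) \<le> Nv^2*Su + 2*Nv*b*ip + b^2*Sv \<and>
               Nv^2*Su + 2*Nv*b*ip + b^2*Sv \<le> (1+\<delta>)*(2*(Nu^2*Nv^2))"
      if b: "b^2 = Nu^2" for b
    proof -
      have e1: "sqnorm n (\<lambda>i. Nv * u i + b * v i) = 2*(Nu^2*Nv^2)"
        using sqnorm_lincomb_disjoint[OF disj] b Nu2 Nv2 by simp
      have e2: "sqnorm m (mat_vec m n A (\<lambda>i. Nv * u i + b * v i)) = Nv^2*Su + 2*Nv*b*ip + b^2*Sv"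
        by (simp add: mat_vec_lincomb sqnorm_lincomb Su_def Sv_def ip_def)
      show ?thesis
        using rip[unfolded has_rip_def, rule_format, OF sparse_lincomb[OF su sv, of Nv b]]
        unfolding e1 e2 .
    qed
    have "(Nu*Nv)*ip \<le> (Nu*Nv)*(\<delta>*Nu*Nv)" "(Nu*Nv)*(-ip) \<le> (Nu*Nv)*(\<delta>*Nu*Nv)"
      using key[of Nu] key[of "-Nu"] by (simp_all add: power2_eq_square algebra_simps)
    hence "ip \<le> \<delta>*Nu*Nv" "-ip \<le> \<delta>*Nu*Nv" using pos by (simp_all add: mult_left_le_imp_le)
    thus ?thesis by (simp add: ip_def Nu_def Nv_def abs_le_iff)
  qed
qed

lemma has_rip_sqnorm_sum_le:
  assumes rip: "has_rip m n A (2*k) \<delta>" and J: "finite J"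
    and sp: "\<And>j. j \<in> J \<Longrightarrow> sparse n k (t j)"
    and disj: "\<And>j j' i. j \<in> J \<Longrightarrow> j' \<in> J \<Longrightarrow> j \<noteq> j' \<Longrightarrow> t j i * t j' i = 0"
  shows "sqnorm m (mat_vec m n A (\<lambda>i. \<Sum>j\<in>J. t j i))
           \<le> (\<Sum>j\<in>J. sqnorm n (t j)) + \<delta> * (\<Sum>j\<in>J. sqrt (sqnorm n (t j)))^2"
proof -
  define X where "X j = mat_vec m n A (t j)" for j
  define N where "N j = sqrt (sqnorm n (t j))" for j
  have N2: "N j * N j = sqnorm n (t j)" for j by (simp add: N_def)
  have "sqnorm m (mat_vec m n A (\<lambda>i. \<Sum>j\<in>J. t j i)) = (\<Sum>j\<in>J. \<Sum>j'\<in>J. dotp m (X j) (X j'))"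
    using J by (simp add: mat_vec_sum sqnorm_sum X_def)
  also have "\<dots> \<le> (\<Sum>j\<in>J. \<Sum>j'\<in>J. \<delta> * (N j * N j') + (if j = j' then sqnorm n (t j) else 0))"
  proof (intro sum_mono)
    fix j j' assume jj: "j \<in> J" "j' \<in> J"
    show "dotp m (X j) (X j') \<le> \<delta> * (N j * N j') + (if j = j' then sqnorm n (t j) else 0)"
    proof (cases "j = j'")
      case True
      have "dotp m (X j) (X j) = sqnorm m (X j)" by (simp add: dotp_def sqnorm_def power2_eq_square)
      also have "\<dots> \<le> (1+\<delta>) * sqnorm n (t j)"
        using rip sparse_mono[OF sp[OF jj(1)]] by (simp add: has_rip_def X_def)
      finally show ?thesis using True by (simp add: N2 algebra_simps)
    next
      case False
      have "dotp m (X j) (X j') \<le> \<delta> * N j * N j'" unfolding X_def N_def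
        using has_rip_abs_dotp_le[OF rip] disj jj False sp by (meson abs_le_D1)
      thus ?thesis using False by (simp add: mult.assoc)
    qed
  qed
  also have "\<dots> = \<delta> * (\<Sum>j\<in>J. N j)^2 + (\<Sum>j\<in>J. sqnorm n (t j))"
  proof -
    have "(\<Sum>j\<in>J. \<Sum>j'\<in>J. \<delta> * (N j * N j')) = \<delta> * ((\<Sum>j\<in>J. N j) * (\<Sum>j'\<in>J. N j'))"
      by (simp add: sum_product sum_distrib_left ac_simps)
    moreover have "(\<Sum>j\<in>J. \<Sum>j'\<in>J. (if j = j' then sqnorm n (t j) else 0)) = (\<Sum>j\<in>J. sqnorm n (t j))"
      using J by (simp add: sum.delta)
    ultimately show ?thesis by (simp add: sum.distrib power2_eq_square)
  qed
  finally show ?thesis by (simp add: N_def)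
qed

lemma sum_restrict_vec_disjoint:
  assumes "finite J" "\<And>j j'. j \<in> J \<Longrightarrow> j' \<in> J \<Longrightarrow> j \<noteq> j' \<Longrightarrow> B j \<inter> B j' = {}"
  shows "(\<Sum>j\<in>J. restrict_vec h (B j) i) = restrict_vec h (\<Union>j\<in>J. B j) i"
proof (cases "i \<in> (\<Union>j\<in>J. B j)")
  case True
  then obtain j0 where j0: "j0 \<in> J" "i \<in> B j0" by blast
  have "restrict_vec h (B j) i = (if j = j0 then h i else 0)" if "j \<in> J" for j
  proof (cases "j = j0")
    case False
    thus ?thesis using assms(2)[OF that j0(1) False] j0(2) by (auto simp: restrict_vec_def)
  qed (simp add: j0 restrict_vec_def)
  hence "(\<Sum>j\<in>J. restrict_vec h (B j) i) = (\<Sum>j\<in>J. if j = j0 then h i else 0)"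
    by (intro sum.cong) auto
  also have "\<dots> = h i" using assms(1) j0(1) by simp
  finally show ?thesis using True by (simp add: restrict_vec_def)
next
  case False
  hence "restrict_vec h (B j) i = 0" if "j \<in> J" for j using that by (auto simp: restrict_vec_def)
  thus ?thesis using False by (simp add: restrict_vec_def)
qed

lemma restrict_vec_partition_eq:
  assumes J: "finite J" and disj: "T0 \<inter> T1 = {}" "\<And>j. j \<in> J \<Longrightarrow> B j \<inter> (T0 \<union> T1) = {}"
      "\<And>j j'. j \<in> J \<Longrightarrow> j' \<in> J \<Longrightarrow> j \<noteq> j' \<Longrightarrow> B j \<inter> B j' = {}"
    and i: "i \<in> T0 \<union> T1 \<union> (\<Union>j\<in>J. B j)"
  shows "restrict_vec h T0 i + restrict_vec h T1 i = h i - (\<Sum>j\<in>J. restrict_vec h (B j) i)"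
proof -
  have r: "(\<Sum>j\<in>J. restrict_vec h (B j) i) = restrict_vec h (\<Union>j\<in>J. B j) i"
    by (rule sum_restrict_vec_disjoint[OF J disj(3)])
  consider "i \<in> T0" | "i \<in> T1" | j where "j \<in> J" "i \<in> B j" using i by blast
  thus ?thesis
  proof cases
    case 1
    hence "i \<notin> T1" "i \<notin> (\<Union>j\<in>J. B j)" using disj(1,2) by blast+
    thus ?thesis using 1 unfolding r by (simp add: restrict_vec_def)
  next
    case 2
    hence "i \<notin> T0" "i \<notin> (\<Union>j\<in>J. B j)" using disj(1,2) by blast+
    thus ?thesis using 2 unfolding r by (simp add: restrict_vec_def)
  next
    case 3
    hence "i \<notin> T0" "i \<notin> T1" "i \<in> (\<Union>j\<in>J. B j)" using disj(2) by blast+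
    thus ?thesis unfolding r by (simp add: restrict_vec_def)
  qed
qed

text \<open>The witness \<open>T\<close> is \<open>\<parallel>A h'\<parallel>\<close>, where \<open>h'\<close> is \<open>h\<close> restricted to the blocks \<open>B j\<close>.\<close>

lemma has_rip_head_tail_estimate:
  fixes T0 T1 :: "nat set" and B :: "nat \<Rightarrow> nat set"
  assumes rip: "has_rip m n A (2*k) \<delta>" and Ah: "norm2 m (mat_vec m n A h) \<le> \<eta>"
    and fin: "finite T0" "finite T1" "finite J" "\<And>j. j \<in> J \<Longrightarrow> finite (B j)"
    and card: "card T0 \<le> k" "card T1 \<le> k" "\<And>j. j \<in> J \<Longrightarrow> card (B j) \<le> k"
    and disj: "T0 \<inter> T1 = {}" "\<And>j. j \<in> J \<Longrightarrow> B j \<inter> (T0 \<union> T1) = {}"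
      "\<And>j j'. j \<in> J \<Longrightarrow> j' \<in> J \<Longrightarrow> j \<noteq> j' \<Longrightarrow> B j \<inter> B j' = {}"
    and cover: "{..<n} \<subseteq> T0 \<union> T1 \<union> (\<Union>j\<in>J. B j)"
  obtains T where "0 \<le> T"
    "(1-\<delta>) * (sqnorm n (restrict_vec h T0) + sqnorm n (restrict_vec h T1)) \<le> (\<eta> + T)^2"
    "T^2 \<le> (\<Sum>j\<in>J. sqnorm n (restrict_vec h (B j)))
           + \<delta> * (\<Sum>j\<in>J. sqrt (sqnorm n (restrict_vec h (B j))))^2"
proof -
  define w where "w = restrict_vec h T0"
  define v where "v = restrict_vec h T1"
  define r where "r = (\<lambda>i. \<Sum>j\<in>J. restrict_vec h (B j) i)"
  define T where "T = norm2 m (mat_vec m n A r)"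
  have "w i + v i = h i - r i" if "i < n" for i
  proof -
    have "i \<in> T0 \<union> T1 \<union> (\<Union>j\<in>J. B j)" using cover that by blast
    thus ?thesis unfolding w_def v_def r_def
      by (rule restrict_vec_partition_eq[OF fin(3) _ _ _ , rotated -1]) (fact disj(1), fact disj(2), fact disj(3))
  qed
  hence "mat_vec m n A (\<lambda>i. 1 * w i + 1 * v i) = mat_vec m n A (\<lambda>i. 1 * h i + (-1) * r i)"
    by (intro mat_vec_cong) simp
  also have "\<dots> = (\<lambda>i. mat_vec m n A h i - mat_vec m n A r i)"
    using mat_vec_lincomb[of m n A 1 h "-1" r] by simp
  finally have "norm2 m (mat_vec m n A (\<lambda>i. 1 * w i + 1 * v i)) \<le> norm2 m (mat_vec m n A h) + T"
    using norm2_diff_le by (simp add: T_def)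
  hence "norm2 m (mat_vec m n A (\<lambda>i. 1 * w i + 1 * v i)) \<le> \<eta> + T" using Ah by linarith
  hence "(norm2 m (mat_vec m n A (\<lambda>i. 1 * w i + 1 * v i)))^2 \<le> (\<eta> + T)^2"
    by (rule power_mono) (simp add: norm2_eq_sqrt_sqnorm)
  hence upper: "sqnorm m (mat_vec m n A (\<lambda>i. 1 * w i + 1 * v i)) \<le> (\<eta> + T)^2"
    by (simp only: power2_norm2)
  have "sparse n (2*k) (\<lambda>i. 1 * w i + 1 * v i)"
    by (intro sparse_lincomb) (simp_all add: w_def v_def sparse_restrict_vec fin card)
  hence lower: "(1-\<delta>) * sqnorm n (\<lambda>i. 1 * w i + 1 * v i) \<le> sqnorm m (mat_vec m n A (\<lambda>i. 1 * w i + 1 * v i))"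
    using rip unfolding has_rip_def by blast
  have "sqnorm n (\<lambda>i. 1 * w i + 1 * v i) = sqnorm n w + sqnorm n v"
    using disj(1) by (subst sqnorm_lincomb_disjoint) (auto simp: w_def v_def restrict_vec_def)
  hence head: "(1-\<delta>) * (sqnorm n w + sqnorm n v) \<le> (\<eta> + T)^2"
    using lower upper by simp
  have tail: "T^2 \<le> (\<Sum>j\<in>J. sqnorm n (restrict_vec h (B j)))
           + \<delta> * (\<Sum>j\<in>J. sqrt (sqnorm n (restrict_vec h (B j))))^2"
    unfolding T_def power2_norm2 r_def
  proof (rule has_rip_sqnorm_sum_le[OF rip fin(3)])
    fix j j' i assume "j \<in> J" "j' \<in> J" "j \<noteq> j'"
    hence "i \<notin> B j \<or> i \<notin> B j'" using disj(3) by blast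
    thus "restrict_vec h (B j) i * restrict_vec h (B j') i = 0" by (auto simp: restrict_vec_def)
  qed (simp add: sparse_restrict_vec fin card)
  have "0 \<le> T" by (simp add: T_def norm2_eq_sqrt_sqnorm)
  from that[OF this head[unfolded w_def v_def] tail] show ?thesis .
qed

section \<open>Sorted block decomposition and the main estimate\<close>

lemma bij_betw_sorted_desc:
  fixes f :: "nat \<Rightarrow> real" and a N :: nat
  obtains \<sigma> where "bij_betw \<sigma> {..<N} {a..<a+N}" "\<And>i j. i \<le> j \<Longrightarrow> j < N \<Longrightarrow> f (\<sigma> j) \<le> f (\<sigma> i)"
proof -
  define L where "L = sort_key (\<lambda>i. - f i) [a..<a+N]"
  have len: "length L = N" by (simp add: L_def)
  have "distinct L" "set L = {a..<a+N}" by (simp_all add: L_def)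
  hence "bij_betw ((!) L) {..<N} {a..<a+N}" using bij_betw_nth len by fastforce
  moreover have "f (L ! j) \<le> f (L ! i)" if "i \<le> j" "j < N" for i j
  proof -
    have "sorted (map (\<lambda>i. - f i) L)" by (simp add: L_def)
    hence "map (\<lambda>i. - f i) L ! i \<le> map (\<lambda>i. - f i) L ! j"
      using that len by (simp add: sorted_iff_nth_mono)
    thus ?thesis using that len by simp
  qed
  ultimately show ?thesis using that by blast
qed

lemma lessThan_mult_eq_UN_blocks:
  fixes l k :: nat
  shows "{..<l*k} = (\<Union>j<l. {j*k..<j*k+k})"
proof
  show "(\<Union>j<l. {j*k..<j*k+k}) \<subseteq> {..<l*k}"
  proof
    fix i assume "i \<in> (\<Union>j<l. {j*k..<j*k+k})"
    then obtain j where "j < l" "i < j*k + k" by auto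
    thus "i \<in> {..<l*k}" using block_end_le[of j l k] by simp
  qed
  show "{..<l*k} \<subseteq> (\<Union>j<l. {j*k..<j*k+k})"
  proof
    fix i assume i: "i \<in> {..<l*k}"
    hence k: "k > 0" by (cases k) auto
    have "i div k * k \<le> i" by simp
    moreover have "i < i div k * k + k"
      using mod_less_divisor[OF k, of i] by (metis add_less_cancel_left div_mult_mod_eq)
    moreover have "i div k < l" using i by (simp add: less_mult_imp_div_less)
    ultimately show "i \<in> (\<Union>j<l. {j*k..<j*k+k})" by (intro UN_I[of "i div k"]) auto
  qed
qed

lemma blocks_disjoint:
  fixes j j' k :: nat
  assumes "j \<noteq> j'"
  shows "{j*k..<j*k+k} \<inter> {j'*k..<j'*k+k} = {}"
proof -
  have "{a*k..<a*k+k} \<inter> {b*k..<b*k+k} = {}" if "a < b" for a b :: nat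
    using block_end_le[OF that, of k] by auto
  thus ?thesis using assms by (metis Int_commute linorder_neq_iff)
qed

lemma sum_blocks_from_one:
  fixes f :: "nat \<Rightarrow> real" and k l :: nat
  assumes "l > 0"
  shows "(\<Sum>j\<in>{1..<l}. \<Sum>i\<in>{j*k..<j*k+k}. f i) = (\<Sum>i\<in>{k..<l*k}. f i)"
proof -
  have "(\<Sum>i<k. f i) + (\<Sum>j\<in>{1..<l}. \<Sum>i\<in>{j*k..<j*k+k}. f i) = (\<Sum>j<l. \<Sum>i\<in>{j*k..<j*k+k}. f i)"
    using assms by (simp add: sum.atLeast_Suc_lessThan atLeast0LessThan[symmetric])
  also have "\<dots> = (\<Sum>i<l*k. f i)" by (rule sum.nat_group)
  also have "\<dots> = (\<Sum>i<k. f i) + (\<Sum>i\<in>{k..<l*k}. f i)"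
    using sum.atLeastLessThan_concat[of 0 k "l*k" f] assms by (simp add: atLeast0LessThan)
  finally show ?thesis by simp
qed

lemma sorted_block_decomposition:
  fixes f :: "nat \<Rightarrow> real" and a k l :: nat
  assumes nn: "\<And>i. 0 \<le> f i"
  obtains c :: "nat \<Rightarrow> real" and B :: "nat \<Rightarrow> nat set" where
    "\<And>i. 0 \<le> c i" "\<And>i j. i \<le> j \<Longrightarrow> j < l*k \<Longrightarrow> c j \<le> c i"
    "\<And>j. finite (B j)" "\<And>j. card (B j) \<le> k"
    "\<And>j j'. j < l \<Longrightarrow> j' < l \<Longrightarrow> j \<noteq> j' \<Longrightarrow> B j \<inter> B j' = {}"
    "(\<Union>j<l. B j) = {a..<a+l*k}"
    "\<And>j (F :: real \<Rightarrow> real). j < l \<Longrightarrow> (\<Sum>i\<in>B j. F (f i)) = (\<Sum>i\<in>{j*k..<j*k+k}. F (c i))"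
    "\<And>F :: real \<Rightarrow> real. (\<Sum>i\<in>{a..<a+l*k}. F (f i)) = (\<Sum>i<l*k. F (c i))"
proof -
  obtain \<sigma> where \<sigma>: "bij_betw \<sigma> {..<l*k} {a..<a+l*k}"
    and sorted: "\<And>i j. i \<le> j \<Longrightarrow> j < l*k \<Longrightarrow> f (\<sigma> j) \<le> f (\<sigma> i)"
    using bij_betw_sorted_desc by blast
  have inj: "inj_on \<sigma> {..<l*k}" using \<sigma> by (simp add: bij_betw_def)
  have blk: "{j*k..<j*k+k} \<subseteq> {..<l*k}" if "j < l" for j
    using that lessThan_mult_eq_UN_blocks[of l k] by blast
  show ?thesis
  proof (rule that[of "\<lambda>i. f (\<sigma> i)" "\<lambda>j. \<sigma> ` {j*k..<j*k+k}"])
    show "card (\<sigma> ` {j*k..<j*k+k}) \<le> k" for j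
      using card_image_le[of "{j*k..<j*k+k}" \<sigma>] by simp
    show "\<sigma> ` {j*k..<j*k+k} \<inter> \<sigma> ` {j'*k..<j'*k+k} = {}" if "j < l" "j' < l" "j \<noteq> j'" for j j'
      using inj_on_image_Int[OF inj blk[OF that(1)] blk[OF that(2)]] blocks_disjoint[OF that(3), of k]
      by (metis image_empty)
    have "(\<Union>j<l. \<sigma> ` {j*k..<j*k+k}) = \<sigma> ` {..<l*k}"
      by (simp add: lessThan_mult_eq_UN_blocks[of l k] image_UN)
    thus "(\<Union>j<l. \<sigma> ` {j*k..<j*k+k}) = {a..<a+l*k}" using \<sigma> by (simp add: bij_betw_def)
    show "(\<Sum>i\<in>\<sigma> ` {j*k..<j*k+k}. F (f i)) = (\<Sum>i\<in>{j*k..<j*k+k}. F (f (\<sigma> i)))" if "j < l" for j F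
      using inj_on_subset[OF inj blk[OF that]] by (simp add: sum.reindex)
    show "(\<Sum>i\<in>{a..<a+l*k}. F (f i)) = (\<Sum>i<l*k. F (f (\<sigma> i)))" for F
    proof -
      have "(\<Sum>i\<in>{a..<a+l*k}. F (f i)) = (\<Sum>i\<in>\<sigma> ` {..<l*k}. F (f i))"
        using \<sigma> by (simp add: bij_betw_def)
      also have "\<dots> = (\<Sum>i<l*k. F (f (\<sigma> i)))" using inj by (simp add: sum.reindex)
      finally show ?thesis .
    qed
  qed (use nn sorted in auto)
qed

lemma has_rip_head_powr_le:
  fixes h :: "nat \<Rightarrow> real"
  assumes k: "k > 0" and l: "l > 0" and n: "n = k + l*k" and rip: "has_rip m n A (2*k) \<delta>"
    and \<delta>: "sqrt 2 / 2 \<le> \<delta>" "\<delta> < 1" and \<epsilon>: "0 \<le> \<epsilon>" and Ah: "norm2 m (mat_vec m n A h) \<le> 2*\<epsilon>"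
    and p: "0 < p" "p < 1"
  shows "(\<Sum>i<k. \<bar>h i\<bar> powr p)
     \<le> 2 powr (3*p/2) / (1-\<delta>) powr (p/2) * real k powr (1 - p/2) * \<epsilon> powr p
       + C_const \<delta> p * (\<Sum>i\<in>{k..<n}. \<bar>h i\<bar> powr p)"
proof -
  obtain c B where c: "\<And>i. 0 \<le> c i" "\<And>i j. i \<le> j \<Longrightarrow> j < l*k \<Longrightarrow> c j \<le> c i"
    and B: "\<And>j. finite (B j)" "\<And>j. card (B j) \<le> k"
      "\<And>j j'. j < l \<Longrightarrow> j' < l \<Longrightarrow> j \<noteq> j' \<Longrightarrow> B j \<inter> B j' = {}"
      "(\<Union>j<l. B j) = {k..<n}"
    and sum_B: "\<And>j (F :: real \<Rightarrow> real). j < l \<Longrightarrow> (\<Sum>i\<in>B j. F \<bar>h i\<bar>) = (\<Sum>i\<in>{j*k..<j*k+k}. F (c i))"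
    and sum_tail: "\<And>F :: real \<Rightarrow> real. (\<Sum>i\<in>{k..<n}. F \<bar>h i\<bar>) = (\<Sum>i<l*k. F (c i))"
    using sorted_block_decomposition[of "\<lambda>i. \<bar>h i\<bar>" l k k] n by auto
  have B_sub: "B j \<subseteq> {k..<n}" if "j < l" for j using B(4) that by blast
  have sq_B: "sqnorm n (restrict_vec h (B j)) = (\<Sum>i\<in>{j*k..<j*k+k}. (c i)^2)" if "j < l" for j
  proof -
    have "B j \<subseteq> {..<n}" using B_sub[OF that] by auto
    thus ?thesis using sqnorm_restrict_vec sum_B[OF that, of "\<lambda>t. t^2"] by simp
  qed
  obtain T where T: "0 \<le> T"
    and head: "(1-\<delta>) * (sqnorm n (restrict_vec h {..<k}) + sqnorm n (restrict_vec h (B 0))) \<le> (2*\<epsilon> + T)^2"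
    and tail: "T^2 \<le> (\<Sum>j\<in>{1..<l}. sqnorm n (restrict_vec h (B j)))
                      + \<delta> * (\<Sum>j\<in>{1..<l}. sqrt (sqnorm n (restrict_vec h (B j))))^2"
  proof (rule has_rip_head_tail_estimate[OF rip Ah, of "{..<k}" "B 0" "{1..<l}" B])
    show "B j \<inter> ({..<k} \<union> B 0) = {}" if "j \<in> {1..<l}" for j
      using B(3)[of j 0] B_sub[of j] that l by auto
    show "{..<k} \<inter> B 0 = {}" using B_sub[OF l] by auto
    have "{..<n} = {..<k} \<union> (\<Union>j<l. B j)" using B(4) n by auto
    also have "{..<l} = insert 0 {1..<l}" using l by auto
    hence "(\<Union>j<l. B j) = B 0 \<union> (\<Union>j\<in>{1..<l}. B j)" by simp
    finally show "{..<n} \<subseteq> {..<k} \<union> B 0 \<union> (\<Union>j\<in>{1..<l}. B j)" by auto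
  qed (use B(1-3) that in auto)
  have "real k powr (1 - p/2) * (\<Sum>i<k. (h i)^2) powr (p/2)
      \<le> 2 powr (3*p/2) / (1-\<delta>) powr (p/2) * real k powr (1 - p/2) * \<epsilon> powr p
        + C_const \<delta> p * (\<Sum>i<l*k. c i powr p)"
  proof (rule sorted_tail_estimate[OF k l p \<delta> \<epsilon> _ T c])
    show "(1-\<delta>) * ((\<Sum>i<k. (h i)^2) + (\<Sum>i<k. (c i)^2)) \<le> (2*\<epsilon> + T)^2"
      using head sq_B[OF l] n by (simp add: sqnorm_restrict_vec atLeast0LessThan)
    show "T^2 \<le> (\<Sum>i\<in>{k..<l*k}. (c i)^2) + \<delta> * (\<Sum>j\<in>{1..<l}. sqrt (\<Sum>i\<in>{j*k..<j*k+k}. (c i)^2))^2"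
      using tail sq_B by (simp add: sum_blocks_from_one[OF l, symmetric])
  qed (simp add: sum_nonneg)
  moreover have "(\<Sum>i<k. \<bar>h i\<bar> powr p) \<le> real k powr (1 - p/2) * (\<Sum>i<k. (h i)^2) powr (p/2)"
    using p k by (intro sum_powr_le_card_powr_sum_squares) auto
  ultimately show ?thesis using sum_tail[of "\<lambda>t. t powr p"] by simp
qed

lemma feasible_diff_norm2_le:
  assumes "norm2 m e \<le> \<epsilon>" "y = (\<lambda>i. mat_vec m n A x i + e i)"
    "norm2 m (\<lambda>i. y i - mat_vec m n A x' i) \<le> \<epsilon>"
  shows "norm2 m (mat_vec m n A (\<lambda>i. x i - x' i)) \<le> 2*\<epsilon>"
proof -
  have "mat_vec m n A (\<lambda>i. x i - x' i) = (\<lambda>i. (y i - mat_vec m n A x' i) - e i)"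
    using mat_vec_lincomb[of m n A 1 x "-1" x'] assms(2) by simp
  thus ?thesis using norm2_diff_le[of m "\<lambda>i. y i - mat_vec m n A x' i" e] assms(1,3) by simp
qed

lemma lpnorm_restrict_vec_powr:
  assumes "0 < p" "T \<subseteq> {..<n}"
  shows "(lpnorm n p (restrict_vec h T)) powr p = (\<Sum>i\<in>T. \<bar>h i\<bar> powr p)"
proof -
  have "(lpnorm n p (restrict_vec h T)) powr p = (\<Sum>i<n. \<bar>restrict_vec h T i\<bar> powr p)"
    using assms(1) by (simp add: lpnorm_def powr_powr sum_nonneg)
  also have "\<dots> = (\<Sum>i<n. if i \<in> T then \<bar>h i\<bar> powr p else 0)"
    by (intro sum.cong) (auto simp: restrict_vec_def)
  also have "\<dots> = (\<Sum>i\<in>{..<n} \<inter> T. \<bar>h i\<bar> powr p)" by (simp add: sum.inter_restrict)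
  also have "{..<n} \<inter> T = T" using assms(2) by auto
  finally show ?thesis .
qed

theorem lemma8:
  fixes k l m n :: nat and A :: "nat \<Rightarrow> nat \<Rightarrow> real"
    and x e y xs :: "nat \<Rightarrow> real" and \<epsilon> p :: real
  assumes "k > 0" and "l > 0" and "m > 0" and "n = (l + 1) * k"
    and "sqrt 2 / 2 \<le> ric m n A (2 * k)" and "ric m n A (2 * k) < 1"
    and "\<epsilon> \<ge> 0" and "norm2 m e \<le> \<epsilon>"
    and "y = (\<lambda>i. mat_vec m n A x i + e i)"
    and "0 < p" and "p < 1"
    and "norm2 m (\<lambda>i. y i - mat_vec m n A xs i) \<le> \<epsilon>"
    and "\<And>\<gamma>. norm2 m (\<lambda>i. y i - mat_vec m n A \<gamma> i) \<le> \<epsilon> \<Longrightarrow> lpnorm n p xs \<le> lpnorm n p \<gamma>"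
  shows "(let h = (\<lambda>i. x i - xs i); \<delta> = ric m n A (2 * k) in
     (lpnorm n p (restrict_vec h {..<k})) powr p
       \<le> 2 powr (3 * p / 2) / (1 - \<delta>) powr (p / 2) * real k powr (1 - p / 2) * \<epsilon> powr p
         + C_const \<delta> p * (lpnorm n p (restrict_vec h {k..<n})) powr p)"
proof -
  define h where "h = (\<lambda>i. x i - xs i)"
  have n: "n = k + l*k" using assms(4) by simp
  have "norm2 m (mat_vec m n A h) \<le> 2*\<epsilon>"
    unfolding h_def using assms(8,9,12) by (rule feasible_diff_norm2_le)
  moreover have "(lpnorm n p (restrict_vec h {..<k})) powr p = (\<Sum>i<k. \<bar>h i\<bar> powr p)"
    "(lpnorm n p (restrict_vec h {k..<n})) powr p = (\<Sum>i\<in>{k..<n}. \<bar>h i\<bar> powr p)"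
    using assms(10) n by (auto intro!: lpnorm_restrict_vec_powr)
  ultimately show ?thesis
    using has_rip_head_powr_le[OF assms(1,2) n has_rip_ric assms(5,6,7) _ assms(10,11)]
    by (simp add: h_def Let_def)
qed
end
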